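(* Let $k\in\mathbb C$ with $\Re(k)<0$, and let $f:\mathbb Q\to\mathbb C$ be $1$-periodic (i.e. $f(x+1)=f(x)$ for all $x\in\mathbb Q$). Let $h:\mathbb R\setminus\{0\}\to\mathbb C$ be such that $$h(x)=f(x)-|x|^{-k}f(-1/x)\qquad (x\in\mathbb Q\setminus\{0\}),$$ and assume that $h$ is continuous on $[-1,1]\setminus\{0\}$ with finite left and right limits $h(0^-)$, $h(0^+)$ at $0$. Then the function $$f^\dagger(x):=\begin{cases} f(x) & x\in\mathbb Q,\\ \lim_{\mathbb Q\ni y\to x} f(y) & x\notin\mathbb Q\end{cases}$$ is well defined for all $x\in\mathbb R$ (i.e. the limit exists for every irrational $x$) and is continuous on $\mathbb R\setminus\mathbb Q$. Moreover, for any rational $x=a/q$ in reduced form ($q\geq 1$), one has $f^\dagger(y)\to f(x)+q^k(h(0^+)-f(0))$ as $y\to x^+$ and $f^\dagger(y)\to f(x)+q^k(h(0^-)-f(0))$ as $y\to x^-$. In particular, $f^\dagger$ is continuous on $\mathbb R$ if and only if $h(0^+)=h(0^-)=f(0)$. Furthermore, in this case (i.e. when $h(0^\pm)=f(0)$), if $h\in\mathcal C^m([-1,1],\mathbb C)$ for an integer $m$ with $0\leq m<|\Re(k)|/2$, then $f^\dagger\in\mathcal C^m(\mathbb R,\mathbb C)$.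
   Context: For $z\in\mathbb C$ and $t>0$, $t^{z}=e^{z\log t}$. In the last sentence, $h\in\mathcal C^m([-1,1])$ means that $h$ (extended at $0$ by its common one-sided limit) is $m$ times continuously differentiable on $[-1,1]$. *)

theory Defs
  imports "HOL-Analysis.Analysis"
begin

definition fdag :: "(real \<Rightarrow> complex) \<Rightarrow> real \<Rightarrow> complex" where
  "fdag f x = (if x \<in> \<rat> then f x else Lim (at x within \<rat>) f)"

definition Cm_on :: "nat \<Rightarrow> real set \<Rightarrow> (real \<Rightarrow> complex) \<Rightarrow> bool" where
  "Cm_on m S g \<longleftrightarrow> (\<exists>D :: nat \<Rightarrow> real \<Rightarrow> complex.
      (\<forall>x\<in>S. D 0 x = g x) \<and>
      (\<forall>j<m. \<forall>x\<in>S. (D j has_vector_derivative D (Suc j) x) (at x within S)) \<and>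
      (\<forall>j\<le>m. continuous_on S (D j)))"

end

theory Submission
  imports Defs
begin

text \<open>Together with 1-periodicity, the relation \<open>f(x) = h(x) + \<bar>x\<bar>\<^sup>-\<^sup>k f(-1/x)\<close> describes \<open>f\<close>
  near every point \<open>x\<close> through its values at the points \<open>-1/(x - n)\<close>, \<open>0 < \<bar>x - n\<bar> < 1\<close>, damped
  by the factor \<open>\<bar>x - n\<bar>\<^sup>-\<^sup>k\<close>. Gluing these local descriptions with a smooth partition of unity
  gives an operator on functions of a real variable that is a contraction for the sup norm
  and maps values at rationals to values at rationals. Its fixed point \<open>F\<close> is continuous at
  the irrationals, where the data are continuous, and it agrees with \<open>f\<close> on the rationals;
  hence \<open>f\<^sup>\<dagger> = F\<close>. The one-sided limits of \<open>F\<close> at a reduced fraction \<open>a/q\<close> follow by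
  induction on \<open>q\<close> from those of \<open>h\<close> at \<open>0\<close>, transported along \<open>x \<mapsto> -1/x\<close>, which
  multiplies the jump by \<open>q\<^sup>k\<close>. Finally, \<open>F'\<close> satisfies a relation of the same shape with
  weight \<open>k + 2\<close>, which stays contracting as long as \<open>2m < -Re k\<close>.\<close>

definition abs_powr :: "complex \<Rightarrow> real \<Rightarrow> complex" where
  "abs_powr s r = (if r = 0 then 0 else exp (s * complex_of_real (ln \<bar>r\<bar>)))"

lemma of_real_abs_powr: "complex_of_real \<bar>r\<bar> powr s = abs_powr s r"
  by (simp add: abs_powr_def powr_def Ln_of_real)

lemma norm_abs_powr: "norm (abs_powr s r) = \<bar>r\<bar> powr Re s"
  by (cases "r = 0") (simp_all add: abs_powr_def powr_def)

lemma abs_powr_diff_1: "r \<noteq> 0 \<Longrightarrow> abs_powr (s - 1) r = abs_powr s r / of_real \<bar>r\<bar>"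
  by (simp add: abs_powr_def exp_diff left_diff_distrib exp_of_real)

lemma abs_powr_diff_2:
  assumes "r \<noteq> 0"
  shows "abs_powr (s - 2) r = abs_powr s r / of_real (r\<^sup>2)"
proof -
  have "abs_powr (s - 2) r = abs_powr ((s - 1) - 1) r" by (simp add: algebra_simps)
  also have "\<dots> = abs_powr s r / of_real \<bar>r\<bar> / of_real \<bar>r\<bar>"
    using abs_powr_diff_1[OF assms, of "s - 1"] abs_powr_diff_1[OF assms, of s] by simp
  also have "\<dots> = abs_powr s r / of_real (r\<^sup>2)"
    by (simp add: divide_divide_eq_left power2_eq_square abs_mult_self_eq flip: of_real_mult)
  finally show ?thesis .
qed

lemma of_nat_powr_eq_exp:
  "n > 0 \<Longrightarrow> (of_nat n :: complex) powr k = exp (k * of_real (ln (real n)))"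
  using Ln_of_real[of "real n"] by (simp add: powr_def)

lemma abs_powr_nat_ratio:
  assumes "b > 0" "q > 0"
  shows "abs_powr (- k) (real b / real q) * of_nat b powr k = (of_nat q :: complex) powr k"
proof -
  have "abs_powr (- k) (real b / real q) = exp (- k * (of_real (ln (real b)) - of_real (ln (real q))))"
    using assms by (simp add: abs_powr_def ln_div)
  then show ?thesis
    using assms by (simp add: of_nat_powr_eq_exp exp_add[symmetric] algebra_simps)
qed

lemma open_same_sign: "r \<noteq> 0 \<Longrightarrow> open {t::real. t \<noteq> 0 \<and> sgn t = sgn r}"
proof (cases "r > 0")
  case True
  then have "{t. t \<noteq> 0 \<and> sgn t = sgn r} = {0<..}" by (auto simp: sgn_if)
  then show ?thesis by simp
next
  case False
  assume "r \<noteq> 0"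
  with False have "{t. t \<noteq> 0 \<and> sgn t = sgn r} = {..<0}" by (auto simp: sgn_if)
  then show ?thesis by simp
qed

lemma abs_powr_has_vector_derivative:
  assumes "r \<noteq> 0"
  shows "(abs_powr s has_vector_derivative (s * of_real (sgn r) * abs_powr (s - 1) r)) (at r)"
proof -
  have ln_abs: "((\<lambda>t. ln \<bar>t\<bar>) has_real_derivative (1 / r)) (at r)"
  proof (cases "r > 0")
    case True
    have "(ln has_real_derivative (1 / r)) (at r)"
      using True by (auto intro!: derivative_eq_intros)
    then show ?thesis
      by (rule has_field_derivative_transform_within_open[where S="{0<..}"]) (use True in auto)
  next
    case False
    then have r: "r < 0" using assms by auto
    have "((\<lambda>t. ln (- t)) has_real_derivative (1 / r)) (at r)"
      using r by (auto intro!: derivative_eq_intros simp: field_simps)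
    then show ?thesis
      by (rule has_field_derivative_transform_within_open[where S="{..<0}"]) (use r in auto)
  qed
  have "((\<lambda>z. exp (s * z)) has_field_derivative s * exp (s * of_real (ln \<bar>r\<bar>)))
      (at (of_real (ln \<bar>r\<bar>)))"
    by (auto intro!: derivative_eq_intros)
  from field_vector_diff_chain_at[OF has_vector_derivative_of_real[OF ln_abs] this]
  have "((\<lambda>t. exp (s * of_real (ln \<bar>t\<bar>))) has_vector_derivative
      of_real (1 / r) * (s * exp (s * of_real (ln \<bar>r\<bar>)))) (at r)"
    by (simp add: o_def)
  moreover have "of_real (1 / r) * (s * exp (s * of_real (ln \<bar>r\<bar>)))
      = s * of_real (sgn r) * abs_powr (s - 1) r"
  proof -
    have "exp (s * of_real (ln \<bar>r\<bar>)) = abs_powr s r" using assms by (simp add: abs_powr_def)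
    then show ?thesis
      unfolding abs_powr_diff_1[OF assms] using assms by (cases "r > 0") (auto simp: sgn_if field_simps)
  qed
  ultimately have "((\<lambda>t. exp (s * of_real (ln \<bar>t\<bar>))) has_vector_derivative
      s * of_real (sgn r) * abs_powr (s - 1) r) (at r)"
    by simp
  then show ?thesis
    by (rule has_vector_derivative_transform_within_open[where S="- {0}"])
       (use assms in \<open>auto simp: abs_powr_def\<close>)
qed

section \<open>The slash operator of the inversion \<open>r \<mapsto> -1/r\<close>\<close>

definition opt_sgn :: "bool \<Rightarrow> real \<Rightarrow> complex" where
  "opt_sgn e r = (if e then of_real (sgn r) else 1)"

text \<open>The sign twist \<open>e\<close>
  is produced by differentiating \<open>\<bar>r\<bar>\<^sup>s\<close>.\<close>

definition slash :: "bool \<Rightarrow> complex \<Rightarrow> (real \<Rightarrow> complex) \<Rightarrow> real \<Rightarrow> complex" where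
  "slash e s g r = (if r = 0 then 0 else opt_sgn e r * abs_powr s r * g (- 1 / r))"

lemma slash_0 [simp]: "slash e s g 0 = 0"
  by (simp add: slash_def)

lemma slash_diff: "slash e s (\<lambda>y. g1 y - g2 y) r = slash e s g1 r - slash e s g2 r"
  by (simp add: slash_def algebra_simps)

lemma norm_slash_le:
  assumes "r \<noteq> 0 \<Longrightarrow> norm (g (- 1 / r)) \<le> B"
  shows "norm (slash e s g r) \<le> \<bar>r\<bar> powr Re s * B"
  using assms
  by (cases "r = 0") (auto simp: slash_def opt_sgn_def norm_mult norm_abs_powr intro!: mult_left_mono)

lemma norm_slash_le_bound:
  assumes "\<bar>r\<bar> \<le> 1" "Re s \<ge> 0" "\<And>y. norm (g y) \<le> B"
  shows "norm (slash e s g r) \<le> B"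
proof -
  have "B \<ge> 0" using assms(3)[of 0] norm_ge_zero[of "g 0"] by linarith
  have "norm (slash e s g r) \<le> \<bar>r\<bar> powr Re s * B" by (rule norm_slash_le) (rule assms(3))
  also have "\<dots> \<le> 1 * B" using assms \<open>B \<ge> 0\<close> by (intro mult_right_mono powr_le1) auto
  finally show ?thesis by simp
qed

lemma has_vector_derivative_zeroI:
  fixes q :: "real \<Rightarrow> 'a::real_normed_vector"
  assumes "q x0 = 0" "((\<lambda>y. norm (q y) / \<bar>y - x0\<bar>) \<longlongrightarrow> 0) (at x0 within S)"
  shows "(q has_vector_derivative 0) (at x0 within S)"
  unfolding has_vector_derivative_def has_derivative_iff_norm
  using assms by (simp add: bounded_linear_zero)

lemma slash_tendsto_0:
  assumes "Re s > 0" "\<And>y. norm (g y) \<le> B"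
  shows "(slash e s g \<longlongrightarrow> 0) (at 0 within S)"
proof (rule Lim_null_comparison)
  show "\<forall>\<^sub>F x in at 0 within S. norm (slash e s g x) \<le> \<bar>x\<bar> powr Re s * B"
    using norm_slash_le assms(2) by auto
  have "((\<lambda>x::real. \<bar>x\<bar> powr Re s) \<longlongrightarrow> 0) (at 0 within S)"
    using assms(1) by (intro tendsto_zero_powrI) (auto intro!: tendsto_eq_intros)
  from tendsto_mult_left_zero[OF this]
  show "((\<lambda>x. \<bar>x\<bar> powr Re s * B) \<longlongrightarrow> 0) (at 0 within S)" by simp
qed

lemma isCont_slash_nonzero:
  assumes r: "r \<noteq> 0" and g: "isCont g (- 1 / r)"
  shows "isCont (slash e s g) r"
proof -
  have "isCont (abs_powr s) r"
    using abs_powr_has_vector_derivative[OF r] by (rule has_vector_derivative_continuous)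
  with r g have "isCont (\<lambda>t. opt_sgn e r * abs_powr s t * g (- 1 / t)) r"
    by (auto intro!: continuous_intros isCont_o2[where g=g])
  moreover have "eventually (\<lambda>t. t \<in> {t. t \<noteq> 0 \<and> sgn t = sgn r}) (nhds r)"
    using r by (intro eventually_nhds_in_open open_same_sign) auto
  then have "eventually (\<lambda>t. opt_sgn e r * abs_powr s t * g (- 1 / t) = slash e s g t) (nhds r)"
    by eventually_elim (auto simp: slash_def opt_sgn_def)
  ultimately show ?thesis using isCont_cong by fastforce
qed

lemma isCont_slash:
  assumes "Re s > 0" "\<And>y. norm (g y) \<le> B" "\<And>y. isCont g y"
  shows "isCont (slash e s g) r"
proof (cases "r = 0")
  case True
  then show ?thesis using slash_tendsto_0[OF assms(1,2), where S=UNIV] by (simp add: isCont_def)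
qed (use isCont_slash_nonzero assms(3) in blast)

lemma slash_has_vector_derivative_nonzero:
  assumes r: "r \<noteq> 0" and dg: "(g has_vector_derivative d (- 1 / r)) (at (- 1 / r))"
  shows "(slash e s g has_vector_derivative s * slash (\<not> e) (s - 1) g r + slash e (s - 2) d r) (at r)"
proof -
  have "((\<lambda>t. - 1 / t) has_vector_derivative (1 / r\<^sup>2)) (at r)"
    using r unfolding has_real_derivative_iff_has_vector_derivative[symmetric]
    by (auto intro!: derivative_eq_intros simp: power2_eq_square)
  from vector_diff_chain_at[OF this dg]
  have "((\<lambda>t. g (- 1 / t)) has_vector_derivative ((1 / r\<^sup>2) *\<^sub>R d (- 1 / r))) (at r)"
    by (simp add: o_def)
  then have "((\<lambda>t. opt_sgn e r * (abs_powr s t * g (- 1 / t))) has_vector_derivative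
      opt_sgn e r * (abs_powr s r * ((1 / r\<^sup>2) *\<^sub>R d (- 1 / r))
        + (s * of_real (sgn r) * abs_powr (s - 1) r) * g (- 1 / r))) (at r)"
    by (intro derivative_intros abs_powr_has_vector_derivative r)
  moreover have "opt_sgn e r * (abs_powr s r * ((1 / r\<^sup>2) *\<^sub>R d (- 1 / r))
        + (s * of_real (sgn r) * abs_powr (s - 1) r) * g (- 1 / r))
      = s * slash (\<not> e) (s - 1) g r + slash e (s - 2) d r"
    using r by (cases "r > 0")
      (auto simp: slash_def opt_sgn_def abs_powr_diff_2 scaleR_conv_of_real sgn_if field_simps)
  ultimately have "((\<lambda>t. opt_sgn e r * (abs_powr s t * g (- 1 / t))) has_vector_derivative
      s * slash (\<not> e) (s - 1) g r + slash e (s - 2) d r) (at r)"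
    by simp
  then show ?thesis
    by (rule has_vector_derivative_transform_within_open[where S="{t. t \<noteq> 0 \<and> sgn t = sgn r}"])
       (use r open_same_sign in \<open>auto simp: slash_def opt_sgn_def\<close>)
qed

lemma slash_has_vector_derivative:
  assumes "Re s > 1" "\<And>y. norm (g y) \<le> B" "\<And>y. (g has_vector_derivative d y) (at y)"
  shows "(slash e s g has_vector_derivative s * slash (\<not> e) (s - 1) g r + slash e (s - 2) d r) (at r)"
proof (cases "r = 0")
  case True
  have "(slash e s g has_vector_derivative 0) (at 0)"
  proof (rule has_vector_derivative_zeroI)
    have bound: "norm (slash e s g y) / \<bar>y\<bar> \<le> \<bar>y\<bar> powr (Re s - 1) * B" if "y \<noteq> 0" for y
    proof -
      have "norm (slash e s g y) \<le> \<bar>y\<bar> powr Re s * B" by (rule norm_slash_le) (rule assms(2))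
      also have "\<dots> = \<bar>y\<bar> * (\<bar>y\<bar> powr (Re s - 1) * B)" using that by (simp add: powr_diff)
      finally show ?thesis using that by (simp add: field_simps)
    qed
    show "((\<lambda>y. norm (slash e s g y) / \<bar>y - 0\<bar>) \<longlongrightarrow> 0) (at 0)"
    proof (rule Lim_null_comparison)
      show "\<forall>\<^sub>F y in at 0. norm (norm (slash e s g y) / \<bar>y - 0\<bar>) \<le> \<bar>y\<bar> powr (Re s - 1) * B"
        using bound by (auto simp: eventually_at_filter)
      show "((\<lambda>y::real. \<bar>y\<bar> powr (Re s - 1) * B) \<longlongrightarrow> 0) (at 0)"
        using assms(1) by (intro tendsto_mult_left_zero tendsto_zero_powrI) (auto intro!: tendsto_eq_intros)
    qed
  qed simp
  then show ?thesis using True by simp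
qed (use slash_has_vector_derivative_nonzero assms(3) in blast)

lemma Cm_on_0_iff: "Cm_on 0 S g \<longleftrightarrow> continuous_on S g"
proof
  assume "Cm_on 0 S g"
  then obtain D where "\<forall>x\<in>S. D 0 x = g x" "continuous_on S (D 0)" unfolding Cm_on_def by auto
  then show "continuous_on S g" using continuous_on_cong by blast
next
  assume "continuous_on S g"
  then show "Cm_on 0 S g" unfolding Cm_on_def by (intro exI[of _ "\<lambda>_. g"]) auto
qed

lemma Cm_on_SucI:
  assumes d: "\<And>x. x \<in> S \<Longrightarrow> (g has_vector_derivative g' x) (at x within S)"
    and c: "continuous_on S g" and m: "Cm_on m S g'"
  shows "Cm_on (Suc m) S g"
proof -
  obtain D where D: "\<forall>x\<in>S. D 0 x = g' x"
      "\<forall>j<m. \<forall>x\<in>S. (D j has_vector_derivative D (Suc j) x) (at x within S)"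
      "\<forall>j\<le>m. continuous_on S (D j)"
    using m unfolding Cm_on_def by blast
  define D' where "D' j = (if j = 0 then g else D (j - 1))" for j
  show ?thesis unfolding Cm_on_def
  proof (intro exI[of _ D'] conjI ballI allI impI)
    fix j x assume "j < Suc m" "x \<in> S"
    then show "(D' j has_vector_derivative D' (Suc j) x) (at x within S)"
      using d D(1,2) by (cases j) (auto simp: D'_def)
  next
    fix j assume "j \<le> Suc m"
    then show "continuous_on S (D' j)" using D(3) c by (cases j) (auto simp: D'_def)
  qed (simp add: D'_def)
qed

lemma Cm_on_SucE:
  assumes "Cm_on (Suc m) S g"
  obtains g' where "\<And>x. x \<in> S \<Longrightarrow> (g has_vector_derivative g' x) (at x within S)"
    "continuous_on S g" "Cm_on m S g'"
proof -
  obtain D where D: "\<forall>x\<in>S. D 0 x = g x"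
      "\<forall>j<Suc m. \<forall>x\<in>S. (D j has_vector_derivative D (Suc j) x) (at x within S)"
      "\<forall>j\<le>Suc m. continuous_on S (D j)"
    using assms unfolding Cm_on_def by blast
  have "(g has_vector_derivative D 1 x) (at x within S)" if x: "x \<in> S" for x
  proof -
    have "(D 0 has_vector_derivative D 1 x) (at x within S)" using D(2) x by auto
    from has_vector_derivative_transform_within[OF this zero_less_one x] D(1)
    show ?thesis by auto
  qed
  moreover have "continuous_on S g" using D(1,3) continuous_on_cong by fastforce
  moreover have "Cm_on m S (D 1)" unfolding Cm_on_def
    by (intro exI[of _ "\<lambda>j. D (Suc j)"]) (use D in auto)
  ultimately show ?thesis using that by blast
qed

lemma Cm_on_add:
  assumes "Cm_on m S f" "Cm_on m S g"
  shows "Cm_on m S (\<lambda>x. f x + g x)"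
proof -
  obtain D where D: "\<forall>x\<in>S. D 0 x = f x"
      "\<forall>j<m. \<forall>x\<in>S. (D j has_vector_derivative D (Suc j) x) (at x within S)"
      "\<forall>j\<le>m. continuous_on S (D j)"
    using assms(1) unfolding Cm_on_def by blast
  obtain E where E: "\<forall>x\<in>S. E 0 x = g x"
      "\<forall>j<m. \<forall>x\<in>S. (E j has_vector_derivative E (Suc j) x) (at x within S)"
      "\<forall>j\<le>m. continuous_on S (E j)"
    using assms(2) unfolding Cm_on_def by blast
  have "((\<lambda>x. D j x + E j x) has_vector_derivative D (Suc j) x + E (Suc j) x) (at x within S)"
    if "j < m" "x \<in> S" for j x
    using has_vector_derivative_add[OF D(2)[rule_format, OF that] E(2)[rule_format, OF that]] .
  moreover have "continuous_on S (\<lambda>x. D j x + E j x)" if "j \<le> m" for j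
    using D(3) E(3) that by (intro continuous_on_add) auto
  ultimately show ?thesis unfolding Cm_on_def
    by (intro exI[of _ "\<lambda>j x. D j x + E j x"]) (use D(1) E(1) in auto)
qed

lemma Cm_on_cmult:
  assumes "Cm_on m S f"
  shows "Cm_on m S (\<lambda>x. c * f x)"
proof -
  obtain D where D: "\<forall>x\<in>S. D 0 x = f x"
      "\<forall>j<m. \<forall>x\<in>S. (D j has_vector_derivative D (Suc j) x) (at x within S)"
      "\<forall>j\<le>m. continuous_on S (D j)"
    using assms unfolding Cm_on_def by blast
  have "((\<lambda>x. c * D j x) has_vector_derivative c * D (Suc j) x) (at x within S)"
    if "j < m" "x \<in> S" for j x
    using has_vector_derivative_mult[OF has_vector_derivative_const[of c] D(2)[rule_format, OF that]]
    by simp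
  then show ?thesis unfolding Cm_on_def
    by (intro exI[of _ "\<lambda>j x. c * D j x"]) (use D in \<open>auto intro!: continuous_intros\<close>)
qed

lemma Cm_on_mono:
  assumes "Cm_on m S f" "j \<le> m"
  shows "Cm_on j S f"
  using assms unfolding Cm_on_def by (auto intro: exI[where x=D for D])

definition bounded_Cm :: "nat \<Rightarrow> (real \<Rightarrow> complex) \<Rightarrow> bool" where
  "bounded_Cm m g \<longleftrightarrow> (\<exists>D :: nat \<Rightarrow> real \<Rightarrow> complex. (\<forall>x. D 0 x = g x) \<and>
      (\<forall>j<m. \<forall>x. (D j has_vector_derivative D (Suc j) x) (at x)) \<and>
      (\<forall>j\<le>m. (\<forall>x. isCont (D j) x) \<and> (\<exists>B. \<forall>x. norm (D j x) \<le> B)))"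

lemma bounded_Cm_imp_bounded:
  assumes "bounded_Cm m g"
  obtains B where "\<And>x. norm (g x) \<le> B" and "\<And>x. isCont g x"
proof -
  obtain D where D: "\<forall>x. D 0 x = g x" "\<forall>j\<le>m. (\<forall>x. isCont (D j) x) \<and> (\<exists>B. \<forall>x. norm (D j x) \<le> B)"
    using assms unfolding bounded_Cm_def by blast
  have "D 0 = g" using D(1) by auto
  with D(2) have "(\<forall>x. isCont g x) \<and> (\<exists>B. \<forall>x. norm (g x) \<le> B)" by blast
  then show ?thesis using that by blast
qed

lemma bounded_Cm_SucE:
  assumes "bounded_Cm (Suc m) g"
  obtains g' where "\<And>x. (g has_vector_derivative g' x) (at x)" "bounded_Cm m g" "bounded_Cm m g'"
proof -
  obtain D where D: "\<forall>x. D 0 x = g x" "\<forall>j<Suc m. \<forall>x. (D j has_vector_derivative D (Suc j) x) (at x)"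
    "\<forall>j\<le>Suc m. (\<forall>x. isCont (D j) x) \<and> (\<exists>B. \<forall>x. norm (D j x) \<le> B)"
    using assms unfolding bounded_Cm_def by blast
  have "D 0 = g" using D(1) by auto
  then have "(g has_vector_derivative D 1 x) (at x)" for x using D(2) by auto
  moreover have "bounded_Cm m g" unfolding bounded_Cm_def by (intro exI[of _ D]) (use D in auto)
  moreover have "bounded_Cm m (D 1)" unfolding bounded_Cm_def
    by (intro exI[of _ "\<lambda>j. D (Suc j)"]) (use D in auto)
  ultimately show ?thesis using that by blast
qed

text \<open>Each derivative costs the weight two powers of \<open>\<bar>r\<bar>\<close>: this is why \<open>C\<^sup>m\<close> needs \<open>2m < Re s\<close>.\<close>

lemma Cm_on_slash: "2 * real m < Re s \<Longrightarrow> bounded_Cm m g \<Longrightarrow> Cm_on m S (slash e s g)"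
proof (induction m arbitrary: s g e)
  case 0
  obtain B where B: "\<And>x. norm (g x) \<le> B" "\<And>x. isCont g x"
    using bounded_Cm_imp_bounded[OF 0(2)] by blast
  have "isCont (slash e s g) r" for r by (rule isCont_slash[of s g B]) (use 0(1) B in auto)
  then show ?case by (simp add: Cm_on_0_iff continuous_at_imp_continuous_on)
next
  case (Suc m)
  obtain g' where d: "\<And>x. (g has_vector_derivative g' x) (at x)"
    and b: "bounded_Cm m g" "bounded_Cm m g'"
    using bounded_Cm_SucE[OF Suc(3)] by blast
  obtain B where B: "\<And>x. norm (g x) \<le> B" "\<And>x. isCont g x"
    using bounded_Cm_imp_bounded[OF b(1)] by blast
  have d': "(slash e s g has_vector_derivative
      s * slash (\<not> e) (s - 1) g r + slash e (s - 2) g' r) (at r)" for r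
    using slash_has_vector_derivative[of s g B g' e r] Suc(2) B d by auto
  show ?case
  proof (rule Cm_on_SucI[OF has_vector_derivative_at_within[OF d']])
    show "continuous_on S (slash e s g)"
      by (intro continuous_at_imp_continuous_on ballI has_vector_derivative_continuous[OF d'])
    show "Cm_on m S (\<lambda>r. s * slash (\<not> e) (s - 1) g r + slash e (s - 2) g' r)"
    proof (intro Cm_on_add Cm_on_cmult)
      show "Cm_on m S (slash (\<not> e) (s - 1) g)" using Suc.IH[of "s - 1" g "\<not> e"] Suc(2) b(1) by auto
      show "Cm_on m S (slash e (s - 2) g')" using Suc.IH[of "s - 2" g' e] Suc(2) b(2) by auto
    qed
  qed
qed

lemma periodic_shift_int:
  fixes F :: "real \<Rightarrow> 'a"
  assumes p: "\<And>x. F (x + 1) = F x"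
  shows "F (x + of_int n) = F x"
proof -
  have nat: "F (y + real m) = F y" for y m
  proof (induction m)
    case (Suc m)
    have "F (y + real (Suc m)) = F ((y + real m) + 1)" by (simp add: algebra_simps)
    also have "\<dots> = F y" using p Suc by simp
    finally show ?case .
  qed simp
  show ?thesis
  proof (cases "n \<ge> 0")
    case True
    then obtain m where "n = int m" by (metis nonneg_eq_int)
    then show ?thesis using nat by simp
  next
    case False
    define m where "m = nat (- n)"
    have m: "n = - int m" using False by (simp add: m_def)
    have "F x = F ((x - real m) + real m)" by simp
    also have "\<dots> = F (x - real m)" by (rule nat)
    finally show ?thesis using m by simp
  qed
qed

lemma periodic_frac:
  fixes F :: "real \<Rightarrow> 'a"
  assumes "\<And>x. F (x + 1) = F x"
  shows "F (x - of_int \<lfloor>x\<rfloor>) = F x"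
  using periodic_shift_int[where F=F, OF assms, of "x - of_int \<lfloor>x\<rfloor>" "\<lfloor>x\<rfloor>"] by simp

lemma periodic_bounded:
  fixes F :: "real \<Rightarrow> 'a::real_normed_vector"
  assumes p: "\<And>x. F (x + 1) = F x" and c: "continuous_on {0..1} F"
  obtains B where "\<And>x. norm (F x) \<le> B"
proof -
  obtain B where B: "\<And>x. x \<in> {0..1} \<Longrightarrow> norm (F x) \<le> B"
    using continuous_on_compact_bound[OF compact_Icc c] by blast
  have "norm (F x) \<le> B" for x
  proof -
    have "x - of_int \<lfloor>x\<rfloor> \<in> {0..1}" by (auto simp: floor_le_iff) linarith
    then show ?thesis using B periodic_frac[where F=F, OF p, of x] by metis
  qed
  then show ?thesis using that by blast
qed

lemma periodic_derivative:
  fixes F :: "real \<Rightarrow> 'a::real_normed_vector"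
  assumes p: "\<And>x. F (x + 1) = F x" and d: "\<And>x. (F has_vector_derivative F' x) (at x)"
  shows "F' (x + 1) = F' x"
proof -
  have "((\<lambda>t. t + 1) has_vector_derivative 1) (at x)"
    by (auto intro!: derivative_eq_intros simp: has_real_derivative_iff_has_vector_derivative[symmetric])
  from vector_diff_chain_at[OF this d[of "x + 1"]]
  have "((F \<circ> (\<lambda>t. t + 1)) has_vector_derivative F' (x + 1)) (at x)" by simp
  moreover have "F \<circ> (\<lambda>t. t + 1) = F" using p by (auto simp: o_def)
  ultimately have "(F has_vector_derivative F' (x + 1)) (at x)" by simp
  then show ?thesis using d[of x] vector_derivative_unique_at by blast
qed

lemma periodic_Cm_imp_bounded_Cm:
  fixes F :: "real \<Rightarrow> complex"
  assumes Cm: "Cm_on m UNIV F" and p: "\<And>x. F (x + 1) = F x"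
  shows "bounded_Cm m F"
proof -
  obtain D where D: "\<forall>x. D 0 x = F x"
      "\<forall>j<m. \<forall>x. (D j has_vector_derivative D (Suc j) x) (at x)"
      "\<forall>j\<le>m. continuous_on UNIV (D j)"
    using Cm unfolding Cm_on_def by auto
  have per: "D j (x + 1) = D j x" if "j \<le> m" for j x
    using that
  proof (induction j arbitrary: x)
    case 0 then show ?case using D(1) p by simp
  next
    case (Suc j)
    then show ?case using periodic_derivative[of "D j" "D (Suc j)"] D(2) by simp
  qed
  have "(\<forall>x. isCont (D j) x) \<and> (\<exists>B. \<forall>x. norm (D j x) \<le> B)" if j: "j \<le> m" for j
  proof
    show "\<forall>x. isCont (D j) x" using D(3) j continuous_on_eq_continuous_at[OF open_UNIV] by blast
    obtain B where "\<And>x. norm (D j x) \<le> B"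
      using periodic_bounded[of "D j"] per[OF j] D(3) j continuous_on_subset by blast
    then show "\<exists>B. \<forall>x. norm (D j x) \<le> B" by blast
  qed
  then show ?thesis unfolding bounded_Cm_def using D(1,2) by blast
qed

section \<open>A smooth partition of unity\<close>

definition bump :: "real \<Rightarrow> real" where
  "bump r = (if \<bar>r\<bar> < 1 then (cos (pi * r / 2))\<^sup>2 else 0)"

definition bump' :: "real \<Rightarrow> real" where
  "bump' r = (if \<bar>r\<bar> < 1 then - (pi / 2) * sin (pi * r) else 0)"

lemma cos_shift_half: "cos (pi * (t - 1) / 2) = sin (pi * t / 2)"
proof -
  have "cos (pi * (t - 1) / 2) = cos (pi * t / 2 - pi / 2)" by (rule arg_cong[where f=cos]) (simp add: field_simps)
  also have "\<dots> = sin (pi * t / 2)" by (simp add: cos_diff)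
  finally show ?thesis .
qed

lemma open_abs_gt_1: "open {r::real. \<bar>r\<bar> > 1}"
proof -
  have "{r::real. \<bar>r\<bar> > 1} = {..<-1} \<union> {1<..}" by auto
  then show ?thesis by (auto intro!: open_Un)
qed

lemma bump_nonneg: "bump r \<ge> 0" by (simp add: bump_def)
lemma bump_eq_0: "\<bar>r\<bar> \<ge> 1 \<Longrightarrow> bump r = 0" by (simp add: bump_def)
lemma bump'_eq_0: "\<bar>r\<bar> \<ge> 1 \<Longrightarrow> bump' r = 0" by (simp add: bump'_def)

lemma bump_add_bump_shift:
  assumes "0 \<le> t" "t < 1"
  shows "bump t + bump (t - 1) = 1"
proof (cases "t = 0")
  case True then show ?thesis by (simp add: bump_def)
next
  case False
  then have t: "0 < t" using assms by simp
  have "cos (pi * (t - 1) / 2) = sin (pi * t / 2)" by (rule cos_shift_half)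
  then show ?thesis using assms t by (simp add: bump_def)
qed

lemma bump_ge_half:
  assumes "0 \<le> t" "t \<le> 1/2"
  shows "bump t \<ge> 1/2"
proof -
  have "cos (pi / 4) \<le> cos (pi * t / 2)"
    using assms by (intro cos_monotone_0_pi_le) auto
  then have "sqrt 2 / 2 \<le> cos (pi * t / 2)" by (simp add: cos_45)
  then have "(sqrt 2 / 2)\<^sup>2 \<le> (cos (pi * t / 2))\<^sup>2"
    by (intro power_mono) auto
  then show ?thesis using assms by (simp add: bump_def power_divide)
qed

lemma bump_shift_ge_half:
  assumes "1/2 \<le> t" "t < 1"
  shows "bump (t - 1) \<ge> 1/2"
proof -
  have e: "cos (pi * (t - 1) / 2) = sin (pi * t / 2)" by (rule cos_shift_half)
  have "sin (pi / 4) \<le> sin (pi * t / 2)"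
    using assms by (intro sin_monotone_2pi_le) auto
  then have "sqrt 2 / 2 \<le> sin (pi * t / 2)" by (simp add: sin_45)
  then have "(sqrt 2 / 2)\<^sup>2 \<le> (sin (pi * t / 2))\<^sup>2"
    by (intro power_mono) auto
  then show ?thesis using assms e by (simp add: bump_def power_divide)
qed

definition contraction_factor :: "real \<Rightarrow> real" where
  "contraction_factor a = (1 + (1/2) powr a) / 2"

lemma contraction_factor_lt_1: "a > 0 \<Longrightarrow> contraction_factor a < 1"
  unfolding contraction_factor_def using powr_less_mono2_neg[of "-a" "1/2" 1] by (simp add: powr_minus_divide)

lemma contraction_factor_nonneg: "contraction_factor a \<ge> 0"
  unfolding contraction_factor_def by (simp add: add_nonneg_nonneg)

lemma bump_powr_sum_le:
  assumes a: "a > 0" and t: "0 \<le> t" "t < 1"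
  shows "bump t * \<bar>t\<bar> powr a + bump (t - 1) * \<bar>t - 1\<bar> powr a \<le> contraction_factor a"
proof -
  have s: "bump t + bump (t - 1) = 1" using bump_add_bump_shift t by simp
  have p1: "bump t \<ge> 0" "bump (t - 1) \<ge> 0" using bump_nonneg by auto
  have le1: "\<bar>t\<bar> powr a \<le> 1" "\<bar>t - 1\<bar> powr a \<le> 1" using t a by (auto intro!: powr_le1)
  show ?thesis
  proof (cases "t \<le> 1/2")
    case True
    have h: "bump t \<ge> 1/2" using bump_ge_half True t by simp
    have "\<bar>t\<bar> powr a \<le> (1/2) powr a" using True t a by (intro powr_mono2) auto
    then have "bump t * \<bar>t\<bar> powr a + bump (t - 1) * \<bar>t - 1\<bar> powr a \<le> bump t * (1/2) powr a + bump (t - 1) * 1"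
      using p1 le1 by (intro add_mono mult_left_mono) auto
    also have "\<dots> = 1 - bump t * (1 - (1/2) powr a)" using s by (simp add: algebra_simps)
    also have "\<dots> \<le> 1 - 1/2 * (1 - (1/2) powr a)"
      using h le1 powr_le1[of a "1/2"] a by (intro diff_left_mono mult_right_mono) auto
    also have "\<dots> = contraction_factor a" by (simp add: contraction_factor_def field_simps)
    finally show ?thesis .
  next
    case False
    have h: "bump (t - 1) \<ge> 1/2" using bump_shift_ge_half False t by simp
    have "\<bar>t - 1\<bar> powr a \<le> (1/2) powr a" using False t a by (intro powr_mono2) auto
    then have "bump t * \<bar>t\<bar> powr a + bump (t - 1) * \<bar>t - 1\<bar> powr a \<le> bump t * 1 + bump (t - 1) * (1/2) powr a"
      using p1 le1 by (intro add_mono mult_left_mono) auto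
    also have "\<dots> = 1 - bump (t - 1) * (1 - (1/2) powr a)" using s by (simp add: algebra_simps)
    also have "\<dots> \<le> 1 - 1/2 * (1 - (1/2) powr a)"
      using h le1 powr_le1[of a "1/2"] a by (intro diff_left_mono mult_right_mono) auto
    also have "\<dots> = contraction_factor a" by (simp add: contraction_factor_def field_simps)
    finally show ?thesis .
  qed
qed

lemma bump_le_quadratic:
  assumes "\<bar>r0\<bar> = 1"
  shows "bump y \<le> (pi / 2)\<^sup>2 * (y - r0)\<^sup>2"
proof (cases "\<bar>y\<bar> < 1")
  case True
  have "cos (pi * y / 2) = cos (pi * \<bar>y\<bar> / 2)" by (cases "y \<ge> 0") auto
  also have "\<dots> = sin (pi / 2 * (1 - \<bar>y\<bar>))"
  proof -
    have "cos (pi * \<bar>y\<bar> / 2) = sin (pi / 2 - pi * \<bar>y\<bar> / 2)" using cos_sin_eq[of "pi * \<bar>y\<bar> / 2"] by simp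
    also have "\<dots> = sin (pi / 2 * (1 - \<bar>y\<bar>))" by (rule arg_cong[where f=sin]) (simp add: field_simps)
    finally show ?thesis .
  qed
  finally have e: "cos (pi * y / 2) = sin (pi / 2 * (1 - \<bar>y\<bar>))" .
  have "\<bar>sin (pi / 2 * (1 - \<bar>y\<bar>))\<bar> \<le> \<bar>pi / 2 * (1 - \<bar>y\<bar>)\<bar>" by (rule abs_sin_x_le_abs_x)
  also have "\<dots> \<le> pi / 2 * \<bar>y - r0\<bar>"
  proof -
    have a: "0 \<le> 1 - \<bar>y\<bar>" using True by simp
    have b: "1 - \<bar>y\<bar> \<le> \<bar>y - r0\<bar>" using assms True by (cases "r0 = 1") auto
    have "\<bar>pi / 2 * (1 - \<bar>y\<bar>)\<bar> = pi / 2 * (1 - \<bar>y\<bar>)" using a by (simp add: abs_mult)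
    also have "\<dots> \<le> pi / 2 * \<bar>y - r0\<bar>" using b by (intro mult_left_mono) auto
    finally show ?thesis .
  qed
  finally have "\<bar>cos (pi * y / 2)\<bar> \<le> pi / 2 * \<bar>y - r0\<bar>" using e by simp
  then have "\<bar>cos (pi * y / 2)\<bar>\<^sup>2 \<le> (pi / 2 * \<bar>y - r0\<bar>)\<^sup>2" by (intro power_mono) auto
  also have "(pi / 2 * \<bar>y - r0\<bar>)\<^sup>2 = (pi / 2)\<^sup>2 * (y - r0)\<^sup>2" unfolding power_mult_distrib power2_abs ..
  finally show ?thesis using True by (simp add: bump_def)
qed (simp add: bump_def)

lemma abs_bump'_le_linear:
  assumes "\<bar>r0\<bar> = 1"
  shows "\<bar>bump' y\<bar> \<le> pi\<^sup>2 / 2 * \<bar>y - r0\<bar>"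
proof (cases "\<bar>y\<bar> < 1")
  case True
  have "\<bar>sin (pi * y)\<bar> = \<bar>sin (pi * (y - r0))\<bar>"
  proof -
    have "r0 = 1 \<or> r0 = -1" using assms by auto
    then show ?thesis
    proof
      assume "r0 = 1" then show ?thesis by (simp add: right_diff_distrib sin_diff)
    next
      assume "r0 = -1" then show ?thesis by (simp add: distrib_left sin_add)
    qed
  qed
  also have "\<dots> \<le> \<bar>pi * (y - r0)\<bar>" by (rule abs_sin_x_le_abs_x)
  finally have "\<bar>sin (pi * y)\<bar> \<le> pi * \<bar>y - r0\<bar>" by (simp add: abs_mult)
  then show ?thesis using True by (simp add: bump'_def abs_mult power2_eq_square)
qed (simp add: bump'_def)

lemma bump_has_real_derivative: "(bump has_real_derivative bump' r) (at r)"
proof -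
  consider "\<bar>r\<bar> < 1" | "\<bar>r\<bar> > 1" | "\<bar>r\<bar> = 1" by linarith
  then show ?thesis
  proof cases
    case 1
    have "((\<lambda>r. (cos (pi * r / 2))\<^sup>2) has_real_derivative
        2 * cos (pi * r / 2) * (- sin (pi * r / 2) * (pi / 2))) (at r)"
      by (auto intro!: derivative_eq_intros)
    moreover have "2 * cos (pi * r / 2) * (- sin (pi * r / 2) * (pi / 2)) = bump' r"
      using 1 sin_double[of "pi * r / 2"] by (simp add: bump'_def algebra_simps)
    ultimately have "((\<lambda>r. (cos (pi * r / 2))\<^sup>2) has_real_derivative bump' r) (at r)" by simp
    then show ?thesis
      by (rule has_field_derivative_transform_within_open[where S="{-1<..<1}"]) (use 1 in \<open>auto simp: bump_def\<close>)
  next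
    case 2
    have "((\<lambda>r. 0) has_real_derivative bump' r) (at r)" using 2 by (simp add: bump'_def)
    then show ?thesis
      by (rule has_field_derivative_transform_within_open[where S="{r. \<bar>r\<bar> > 1}"])
         (use 2 open_abs_gt_1 in \<open>auto simp: bump_def\<close>)
  next
    case 3
    have "(bump has_real_derivative 0) (at r)"
      unfolding has_real_derivative_iff_has_vector_derivative
    proof (rule has_vector_derivative_zeroI)
      show "bump r = 0" using 3 by (simp add: bump_def)
      show "((\<lambda>y. norm (bump y) / \<bar>y - r\<bar>) \<longlongrightarrow> 0) (at r)"
      proof (rule Lim_null_comparison)
        have "norm (norm (bump y) / \<bar>y - r\<bar>) \<le> (pi / 2)\<^sup>2 * \<bar>y - r\<bar>" if "y \<noteq> r" for y
          using bump_le_quadratic[OF 3, of y] bump_nonneg[of y] that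
          by (simp add: divide_le_eq power2_eq_square abs_mult_self_eq mult.assoc)
        then show "\<forall>\<^sub>F y in at r. norm (norm (bump y) / \<bar>y - r\<bar>) \<le> (pi / 2)\<^sup>2 * \<bar>y - r\<bar>"
          by (auto simp: eventually_at_filter)
        show "((\<lambda>y. (pi / 2)\<^sup>2 * \<bar>y - r\<bar>) \<longlongrightarrow> 0) (at r)"
          by (auto intro!: tendsto_eq_intros)
      qed
    qed
    then show ?thesis using 3 by (simp add: bump'_def)
  qed
qed

lemma isCont_bump: "isCont bump r"
  using bump_has_real_derivative DERIV_isCont by blast

lemma isCont_bump': "isCont bump' r"
proof -
  consider "\<bar>r\<bar> < 1" | "\<bar>r\<bar> > 1" | "\<bar>r\<bar> = 1" by linarith
  then show ?thesis
  proof cases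
    case 1
    have "isCont (\<lambda>r. - (pi / 2) * sin (pi * r)) r" by (intro continuous_intros)
    moreover have "eventually (\<lambda>y. y \<in> {-1<..<1}) (nhds r)" using 1 by (intro eventually_nhds_in_open) auto
    then have "eventually (\<lambda>y. - (pi / 2) * sin (pi * y) = bump' y) (nhds r)"
      by eventually_elim (auto simp: bump'_def)
    ultimately show ?thesis using isCont_cong by fastforce
  next
    case 2
    have "eventually (\<lambda>y. y \<in> {y. \<bar>y\<bar> > 1}) (nhds r)" using 2
      by (intro eventually_nhds_in_open open_abs_gt_1) auto
    then have "eventually (\<lambda>y. 0 = bump' y) (nhds r)"
      by eventually_elim (auto simp: bump'_def)
    then show ?thesis using isCont_cong continuous_const by fastforce
  next
    case 3
    have "(bump' \<longlongrightarrow> 0) (at r)"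
    proof (rule Lim_null_comparison)
      show "\<forall>\<^sub>F y in at r. norm (bump' y) \<le> pi\<^sup>2 / 2 * \<bar>y - r\<bar>" using abs_bump'_le_linear[OF 3] by auto
      show "((\<lambda>y. pi\<^sup>2 / 2 * \<bar>y - r\<bar>) \<longlongrightarrow> 0) (at r)" by (auto intro!: tendsto_eq_intros)
    qed
    then show ?thesis using 3 by (simp add: isCont_def bump'_def)
  qed
qed

lemma abs_bump'_le: "\<bar>bump' r\<bar> \<le> pi / 2"
  by (simp add: bump'_def abs_mult)

lemma isCont_of_real_mult_vanishing:
  fixes U :: "real \<Rightarrow> complex"
  assumes \<phi>: "isCont \<phi> r" "\<phi> r = 0" and U: "\<And>y. \<phi> y \<noteq> 0 \<Longrightarrow> norm (U y) \<le> B"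
  shows "isCont (\<lambda>y. of_real (\<phi> y) * U y) r"
proof -
  have bound: "norm (of_real (\<phi> y) * U y) \<le> \<bar>\<phi> y\<bar> * max B 0" for y
    using U[of y] by (cases "\<phi> y = 0") (auto simp: norm_mult intro!: mult_left_mono)
  have "((\<lambda>y. \<bar>\<phi> y\<bar> * max B 0) \<longlongrightarrow> \<bar>\<phi> r\<bar> * max B 0) (at r)"
    using \<phi>(1) by (intro tendsto_intros) (simp add: isCont_def)
  then have "((\<lambda>y. \<bar>\<phi> y\<bar> * max B 0) \<longlongrightarrow> 0) (at r)" using \<phi>(2) by simp
  then have "((\<lambda>y. of_real (\<phi> y) * U y) \<longlongrightarrow> 0) (at r)"
    by (rule Lim_null_comparison[rotated]) (intro always_eventually allI bound)
  then show ?thesis using \<phi>(2) by (simp add: isCont_def)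
qed

lemma has_vector_derivative_of_real_mult_vanishing:
  fixes U :: "real \<Rightarrow> complex"
  assumes \<phi>: "(\<phi> has_real_derivative 0) (at r)" "\<phi> r = 0"
    and U: "\<And>y. \<phi> y \<noteq> 0 \<Longrightarrow> norm (U y) \<le> B"
  shows "((\<lambda>y. of_real (\<phi> y) * U y) has_vector_derivative 0) (at r)"
proof (rule has_vector_derivative_zeroI)
  have bound: "norm (norm (of_real (\<phi> y) * U y) / \<bar>y - r\<bar>) \<le> \<bar>\<phi> y / (y - r)\<bar> * max B 0" for y
  proof -
    have "norm (of_real (\<phi> y) * U y) \<le> \<bar>\<phi> y\<bar> * max B 0"
      using U[of y] by (cases "\<phi> y = 0") (auto simp: norm_mult intro!: mult_left_mono)
    then have "norm (norm (of_real (\<phi> y) * U y) / \<bar>y - r\<bar>) \<le> \<bar>\<phi> y\<bar> * max B 0 / \<bar>y - r\<bar>"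
      unfolding real_norm_def abs_divide abs_norm_cancel abs_abs by (rule divide_right_mono) simp
    also have "\<dots> = \<bar>\<phi> y / (y - r)\<bar> * max B 0" by (simp add: abs_divide)
    finally show ?thesis .
  qed
  have "((\<lambda>y. \<phi> y / (y - r)) \<longlongrightarrow> 0) (at r)"
    using \<phi> by (simp add: has_field_derivative_iff)
  from tendsto_mult_left_zero[OF tendsto_rabs_zero[OF this]]
  have "((\<lambda>y. \<bar>\<phi> y / (y - r)\<bar> * max B 0) \<longlongrightarrow> 0) (at r)" .
  then show "((\<lambda>y. norm (of_real (\<phi> y) * U y) / \<bar>y - r\<bar>) \<longlongrightarrow> 0) (at r)"
    by (rule Lim_null_comparison[rotated]) (intro always_eventually allI bound)
qed (use \<phi> in simp)

lemma isCont_of_real_mult_cutoff: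
  fixes U :: "real \<Rightarrow> complex"
  assumes "isCont \<phi> r" "\<And>y. 1 \<le> \<bar>y\<bar> \<Longrightarrow> \<phi> y = 0"
    and "\<And>y. \<bar>y\<bar> < 1 \<Longrightarrow> isCont U y" "\<And>y. \<bar>y\<bar> < 1 \<Longrightarrow> norm (U y) \<le> B"
  shows "isCont (\<lambda>y. of_real (\<phi> y) * U y) r"
proof (cases "\<bar>r\<bar> < 1")
  case True
  then show ?thesis by (intro continuous_intros assms(1) assms(3))
next
  case False
  show ?thesis
  proof (rule isCont_of_real_mult_vanishing[OF assms(1)])
    show "\<phi> r = 0" using False assms(2) by simp
    show "norm (U y) \<le> B" if "\<phi> y \<noteq> 0" for y using that assms(2,4) not_le by blast
  qed
qed

lemma bump_mult_has_vector_derivative: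
  fixes U U' :: "real \<Rightarrow> complex"
  assumes "\<And>r. \<bar>r\<bar> < 1 \<Longrightarrow> (U has_vector_derivative U' r) (at r)"
    and "\<And>r. \<bar>r\<bar> < 1 \<Longrightarrow> norm (U r) \<le> B"
  shows "((\<lambda>r. of_real (bump r) * U r) has_vector_derivative
      of_real (bump' r) * U r + of_real (bump r) * U' r) (at r)"
proof (cases "\<bar>r\<bar> < 1")
  case True
  from has_vector_derivative_mult[OF has_vector_derivative_of_real[OF bump_has_real_derivative]
      assms(1)[OF True]]
  show ?thesis by (simp add: add.commute)
next
  case False
  then have "bump r = 0" "bump' r = 0" by (simp_all add: bump_eq_0 bump'_eq_0)
  have "((\<lambda>r. of_real (bump r) * U r) has_vector_derivative 0) (at r)"
  proof (rule has_vector_derivative_of_real_mult_vanishing)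
    show "(bump has_real_derivative 0) (at r)"
      using bump_has_real_derivative[of r] \<open>bump' r = 0\<close> by simp
    show "norm (U y) \<le> B" if "bump y \<noteq> 0" for y
      using that assms(2) bump_eq_0 not_le by blast
  qed fact
  with \<open>bump r = 0\<close> \<open>bump' r = 0\<close> show ?thesis by simp
qed

text \<open>For \<open>Q\<close> supported in \<open>(-1,1)\<close>, \<open>periodize Q x\<close> is the sum of \<open>Q (x - n)\<close> over all
  integers \<open>n\<close>.\<close>

definition periodize :: "(real \<Rightarrow> 'a::ab_group_add) \<Rightarrow> real \<Rightarrow> 'a" where
  "periodize Q x = Q (x - of_int \<lfloor>x\<rfloor>) + Q (x - of_int \<lfloor>x\<rfloor> - 1)"

lemma periodize_periodic: "periodize Q (x + 1) = periodize Q x"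
  by (simp add: periodize_def)

lemma periodize_eq_sum:
  assumes supp: "\<And>r. \<bar>r\<bar> \<ge> 1 \<Longrightarrow> Q r = 0" and N: "finite N" "{\<lfloor>y\<rfloor>, \<lfloor>y\<rfloor> + 1} \<subseteq> N"
  shows "periodize Q y = (\<Sum>n\<in>N. Q (y - of_int n))"
proof -
  have "(\<Sum>n\<in>N. Q (y - of_int n)) = (\<Sum>n\<in>{\<lfloor>y\<rfloor>, \<lfloor>y\<rfloor> + 1}. Q (y - of_int n))"
  proof (rule sum.mono_neutral_right[OF N(1) N(2)])
    show "\<forall>n\<in>N - {\<lfloor>y\<rfloor>, \<lfloor>y\<rfloor> + 1}. Q (y - of_int n) = 0"
    proof
      fix n assume n: "n \<in> N - {\<lfloor>y\<rfloor>, \<lfloor>y\<rfloor> + 1}"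
      have "\<bar>y - of_int n\<bar> \<ge> 1"
      proof (cases "n \<le> \<lfloor>y\<rfloor>")
        case True
        then have "n \<le> \<lfloor>y\<rfloor> - 1" using n by auto
        then have "of_int n \<le> of_int \<lfloor>y\<rfloor> - (1::real)" by linarith
        then show ?thesis using of_int_floor_le[of y] by linarith
      next
        case False
        then have "n \<ge> \<lfloor>y\<rfloor> + 2" using n by auto
        then have "of_int n \<ge> of_int \<lfloor>y\<rfloor> + (2::real)" by linarith
        then show ?thesis using real_of_int_floor_add_one_gt[of y] by linarith
      qed
      then show "Q (y - of_int n) = 0" by (rule supp)
    qed
  qed
  also have "\<dots> = periodize Q y" by (simp add: periodize_def algebra_simps)
  finally show ?thesis by simp
qed

lemma floor_window:
  assumes "\<bar>y - x\<bar> < 1"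
  shows "{\<lfloor>y\<rfloor>, \<lfloor>y\<rfloor> + 1} \<subseteq> {\<lfloor>x\<rfloor> - 1..\<lfloor>x\<rfloor> + 2}"
proof -
  have "\<lfloor>y\<rfloor> \<ge> \<lfloor>x\<rfloor> - 1" using assms by (simp add: le_floor_iff) linarith
  moreover have "\<lfloor>y\<rfloor> \<le> \<lfloor>x\<rfloor> + 1" using assms by (simp add: floor_le_iff) linarith
  ultimately show ?thesis by auto
qed

lemma periodize_eventually_eq_sum:
  assumes supp: "\<And>r. \<bar>r\<bar> \<ge> 1 \<Longrightarrow> Q r = 0"
  shows "eventually (\<lambda>y. (\<Sum>n\<in>{\<lfloor>x\<rfloor> - 1..\<lfloor>x\<rfloor> + 2}. Q (y - of_int n)) = periodize Q y) (nhds x)"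
proof -
  have "eventually (\<lambda>y. y \<in> ball x 1) (nhds x)" by (intro eventually_nhds_in_open) auto
  then show ?thesis
  proof eventually_elim
    case (elim y)
    then have "\<bar>y - x\<bar> < 1" by (simp add: dist_real_def abs_minus_commute)
    then have "{\<lfloor>y\<rfloor>, \<lfloor>y\<rfloor> + 1} \<subseteq> {\<lfloor>x\<rfloor> - 1..\<lfloor>x\<rfloor> + 2}" by (rule floor_window)
    then have "periodize Q y = (\<Sum>n\<in>{\<lfloor>x\<rfloor> - 1..\<lfloor>x\<rfloor> + 2}. Q (y - of_int n))"
      by (intro periodize_eq_sum supp) auto
    then show ?case by simp
  qed
qed

lemma isCont_periodize:
  fixes Q :: "real \<Rightarrow> 'a::real_normed_vector"
  assumes supp: "\<And>r. \<bar>r\<bar> \<ge> 1 \<Longrightarrow> Q r = 0" and c: "\<And>n::int. isCont Q (x - of_int n)"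
  shows "isCont (periodize Q) x"
proof -
  have "isCont (\<lambda>y. Q (y - of_int n)) x" for n :: int
    by (rule isCont_o2[where f="\<lambda>y. y - of_int n" and a=x and g=Q]) (auto intro!: continuous_intros c)
  then have "isCont (\<lambda>y. \<Sum>n\<in>{\<lfloor>x\<rfloor> - 1..\<lfloor>x\<rfloor> + 2}. Q (y - of_int n)) x"
    by (intro continuous_intros)
  moreover have "eventually (\<lambda>y. (\<Sum>n\<in>{\<lfloor>x\<rfloor> - 1..\<lfloor>x\<rfloor> + 2}. Q (y - of_int n)) = periodize Q y) (nhds x)"
    by (rule periodize_eventually_eq_sum) (rule supp)
  ultimately show ?thesis using isCont_cong by fastforce
qed

lemma periodize_has_vector_derivative:
  fixes Q :: "real \<Rightarrow> 'a::real_normed_vector"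
  assumes supp: "\<And>r. \<bar>r\<bar> \<ge> 1 \<Longrightarrow> Q r = 0" and supp': "\<And>r. \<bar>r\<bar> \<ge> 1 \<Longrightarrow> Q' r = 0"
    and d: "\<And>n::int. (Q has_vector_derivative Q' (x - of_int n)) (at (x - of_int n))"
  shows "(periodize Q has_vector_derivative periodize Q' x) (at x)"
proof -
  define N where "N = {\<lfloor>x\<rfloor> - 1..\<lfloor>x\<rfloor> + 2}"
  have dn: "((\<lambda>y. Q (y - of_int n)) has_vector_derivative Q' (x - of_int n)) (at x)" for n :: int
  proof -
    have d1: "((\<lambda>y. y - of_int n) has_vector_derivative 1) (at x)"
      by (auto intro!: derivative_eq_intros simp: has_real_derivative_iff_has_vector_derivative[symmetric])
    show ?thesis using vector_diff_chain_at[OF d1 d[of n]] by (simp add: o_def)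
  qed
  have "((\<lambda>y. \<Sum>n\<in>N. Q (y - of_int n)) has_vector_derivative (\<Sum>n\<in>N. Q' (x - of_int n))) (at x)"
    by (intro has_vector_derivative_sum dn)
  moreover have "(\<Sum>n\<in>N. Q' (x - of_int n)) = periodize Q' x"
  proof -
    have "{\<lfloor>x\<rfloor>, \<lfloor>x\<rfloor> + 1} \<subseteq> N" using floor_window[of x x] by (simp add: N_def)
    then have "periodize Q' x = (\<Sum>n\<in>N. Q' (x - of_int n))" by (intro periodize_eq_sum supp') (auto simp: N_def)
    then show ?thesis by simp
  qed
  ultimately have "((\<lambda>y. \<Sum>n\<in>N. Q (y - of_int n)) has_vector_derivative periodize Q' x) (at x)" by simp
  then show ?thesis
  proof (rule has_vector_derivative_transform_within_open[where S="ball x 1"])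
    fix y assume "y \<in> ball x 1"
    then have "\<bar>y - x\<bar> < 1" by (simp add: dist_real_def abs_minus_commute)
    then show "(\<Sum>n\<in>N. Q (y - of_int n)) = periodize Q y"
    proof -
      have "{\<lfloor>y\<rfloor>, \<lfloor>y\<rfloor> + 1} \<subseteq> N" using floor_window[OF \<open>\<bar>y - x\<bar> < 1\<close>] by (simp add: N_def)
      then have "periodize Q y = (\<Sum>n\<in>N. Q (y - of_int n))" by (intro periodize_eq_sum supp) (auto simp: N_def)
      then show ?thesis by simp
    qed
  qed auto
qed

lemma norm_periodize_bump_le:
  fixes Q :: "real \<Rightarrow> complex"
  assumes Q: "\<And>r. r = x - of_int \<lfloor>x\<rfloor> \<or> r = x - of_int \<lfloor>x\<rfloor> - 1 \<Longrightarrow>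
       norm (Q r) \<le> a + bump r * b + bump r * \<bar>r\<bar> powr c * e"
    and e: "e \<ge> 0" and c: "c > 0"
  shows "norm (periodize Q x) \<le> 2 * a + b + contraction_factor c * e"
proof -
  define t where "t = x - of_int \<lfloor>x\<rfloor>"
  have t: "0 \<le> t" "t < 1" unfolding t_def by (auto, linarith)
  have q1: "norm (Q t) \<le> a + bump t * b + bump t * \<bar>t\<bar> powr c * e" by (rule Q) (simp add: t_def)
  have q2: "norm (Q (t - 1)) \<le> a + bump (t - 1) * b + bump (t - 1) * \<bar>t - 1\<bar> powr c * e" by (rule Q) (simp add: t_def)
  have "norm (periodize Q x) \<le> norm (Q t) + norm (Q (t - 1))"
    unfolding periodize_def t_def by (rule norm_triangle_ineq)
  also have "\<dots> \<le> (a + bump t * b + bump t * \<bar>t\<bar> powr c * e) + (a + bump (t - 1) * b + bump (t - 1) * \<bar>t - 1\<bar> powr c * e)"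
    using q1 q2 by (rule add_mono)
  also have "\<dots> = 2 * a + (bump t + bump (t - 1)) * b + (bump t * \<bar>t\<bar> powr c + bump (t - 1) * \<bar>t - 1\<bar> powr c) * e"
    by (simp add: algebra_simps)
  also have "\<dots> \<le> 2 * a + b + contraction_factor c * e"
    using bump_add_bump_shift[OF t] mult_right_mono[OF bump_powr_sum_le[OF c t] e] by simp
  finally show ?thesis .
qed

lemma nonpos_if_le_geometric:
  fixes a C \<tau> :: real
  assumes "\<And>n. a \<le> C * \<tau> ^ n" "0 \<le> \<tau>" "\<tau> < 1"
  shows "a \<le> 0"
proof -
  have "(\<lambda>n. C * \<tau> ^ n) \<longlonglongrightarrow> C * 0"
    by (intro tendsto_mult tendsto_const LIMSEQ_power_zero) (use assms in auto)
  then show ?thesis using assms(1) by (simp add: LIMSEQ_le_const)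
qed

lemma LIMSEQ_if_dist_le_geometric:
  fixes u :: "nat \<Rightarrow> 'a::real_normed_vector"
  assumes "\<And>n. norm (u n - L) \<le> C * \<tau> ^ n" "0 \<le> \<tau>" "\<tau> < 1"
  shows "u \<longlonglongrightarrow> L"
proof -
  have "(\<lambda>n. C * \<tau> ^ n) \<longlonglongrightarrow> C * 0"
    by (intro tendsto_mult tendsto_const LIMSEQ_power_zero) (use assms in auto)
  then have l0: "(\<lambda>n. C * \<tau> ^ n) \<longlonglongrightarrow> 0" by simp
  have "(\<lambda>n. u n - L) \<longlonglongrightarrow> 0"
  proof (rule Lim_null_comparison[of _ "\<lambda>n. C * \<tau> ^ n"])
    show "\<forall>\<^sub>F n in sequentially. norm (u n - L) \<le> C * \<tau> ^ n" using assms(1) by simp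
  qed (rule l0)
  then show ?thesis by (simp add: LIM_zero_iff)
qed

lemma geometric_Cauchy_limit:
  fixes u :: "nat \<Rightarrow> real \<Rightarrow> complex"
  assumes d: "\<And>n x. norm (u (Suc n) x - u n x) \<le> C * \<tau> ^ n" and t: "0 \<le> \<tau>" "\<tau> < 1"
  shows "\<exists>U. \<forall>x. (\<lambda>n. u n x) \<longlonglongrightarrow> U x \<and> (\<forall>n. norm (U x - u n x) \<le> C * \<tau> ^ n / (1 - \<tau>))"
proof -
  have "\<exists>L. (\<lambda>n. u n x) \<longlonglongrightarrow> L \<and> (\<forall>n. norm (L - u n x) \<le> C * \<tau> ^ n / (1 - \<tau>))" for x
  proof -
    define a where "a i = u (Suc i) x - u i x" for i
    have sg: "summable (\<lambda>i. C * \<tau> ^ i)" using t by (intro summable_mult summable_geometric) auto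
    have sa: "summable (\<lambda>i. norm (a i))"
      by (rule summable_comparison_test[OF _ sg]) (use d in \<open>auto simp: a_def\<close>)
    then have sa': "summable a" by (rule summable_norm_cancel)
    have tel: "u n x = u 0 x + (\<Sum>i<n. a i)" for n
      unfolding a_def by (induction n) auto
    define L where "L = u 0 x + suminf a"
    have "(\<lambda>n. u 0 x + (\<Sum>i<n. a i)) \<longlonglongrightarrow> L"
      unfolding L_def by (intro tendsto_add tendsto_const summable_LIMSEQ sa')
    moreover have "(\<lambda>n. u n x) = (\<lambda>n. u 0 x + (\<Sum>i<n. a i))" by (rule ext) (rule tel)
    ultimately have lim: "(\<lambda>n. u n x) \<longlonglongrightarrow> L" by simp
    have bnd: "norm (L - u n x) \<le> C * \<tau> ^ n / (1 - \<tau>)" for n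
    proof -
      have "L - u n x = (\<Sum>i. a (i + n))"
        using suminf_split_initial_segment[OF sa', of n] tel[of n] by (simp add: L_def)
      also have "norm \<dots> \<le> (\<Sum>i. norm (a (i + n)))"
        by (rule summable_norm) (use sa summable_iff_shift[of "\<lambda>i. norm (a i)" n] in simp)
      also have "\<dots> \<le> (\<Sum>i. C * \<tau> ^ n * \<tau> ^ i)"
      proof (rule suminf_le)
        show "norm (a (i + n)) \<le> C * \<tau> ^ n * \<tau> ^ i" for i
          using d[of "i + n" x] by (simp add: a_def power_add mult_ac)
        show "summable (\<lambda>i. norm (a (i + n)))" using sa summable_iff_shift[of "\<lambda>i. norm (a i)" n] by simp
        show "summable (\<lambda>i. C * \<tau> ^ n * \<tau> ^ i)" using t by (intro summable_mult summable_geometric) auto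
      qed
      also have "\<dots> = C * \<tau> ^ n / (1 - \<tau>)"
        using suminf_mult[of "\<lambda>i. \<tau> ^ i" "C * \<tau> ^ n"] suminf_geometric[of \<tau>] t summable_geometric[of \<tau>]
        by (simp add: divide_inverse)
      finally show ?thesis .
    qed
    show ?thesis using lim bnd by blast
  qed
  then show ?thesis by metis
qed

lemma perturbed_contraction_geometric_decay:
  fixes e :: "nat \<Rightarrow> 'a \<Rightarrow> real"
  assumes e0: "\<And>x. e 0 x \<le> E0"
    and step: "\<And>n c x. (\<And>y. e n y \<le> c) \<Longrightarrow> e (Suc n) x \<le> K * \<rho>1 ^ n + \<rho>2 * c"
    and K: "0 \<le> K" and \<rho>: "0 \<le> \<rho>1" "\<rho>1 \<le> \<tau>" "0 \<le> \<rho>2" "\<rho>2 < \<tau>"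
  shows "e n x \<le> max E0 (K / (\<tau> - \<rho>2)) * \<tau> ^ n"
proof (induction n arbitrary: x)
  case 0
  show ?case using e0[of x] by simp
next
  case (Suc n)
  define M where "M = max E0 (K / (\<tau> - \<rho>2))"
  have "K / (\<tau> - \<rho>2) \<le> M" by (simp add: M_def)
  then have KM: "K \<le> M * (\<tau> - \<rho>2)" using \<rho> by (simp add: pos_divide_le_eq)
  have "e (Suc n) x \<le> K * \<rho>1 ^ n + \<rho>2 * (M * \<tau> ^ n)"
    by (rule step) (use Suc.IH in \<open>simp add: M_def\<close>)
  also have "\<dots> \<le> M * (\<tau> - \<rho>2) * \<tau> ^ n + \<rho>2 * (M * \<tau> ^ n)"
  proof -
    have "K * \<rho>1 ^ n \<le> K * \<tau> ^ n" using K \<rho> by (intro mult_left_mono power_mono) auto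
    also have "\<dots> \<le> M * (\<tau> - \<rho>2) * \<tau> ^ n" using KM \<rho> by (intro mult_right_mono) auto
    finally show ?thesis by simp
  qed
  also have "\<dots> = M * \<tau> ^ Suc n" by (simp add: algebra_simps)
  finally show ?case by (simp add: M_def)
qed

lemma isCont_geometric_limit:
  fixes u :: "nat \<Rightarrow> real \<Rightarrow> complex"
  assumes c: "\<And>n. isCont (u n) x" and b: "\<And>n y. norm (U y - u n y) \<le> C * \<tau> ^ n"
    and t: "0 \<le> \<tau>" "\<tau> < 1"
  shows "isCont U x"
proof -
  have ul: "uniform_limit UNIV u U sequentially"
    unfolding uniform_limit_iff
  proof (intro allI impI)
    fix e :: real assume e: "e > 0"
    have "(\<lambda>n. C * \<tau> ^ n) \<longlonglongrightarrow> C * 0"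
      by (intro tendsto_mult tendsto_const LIMSEQ_power_zero) (use t in auto)
    then have "eventually (\<lambda>n. dist (C * \<tau> ^ n) 0 < e) sequentially"
      using e by (simp add: tendsto_iff)
    then show "\<forall>\<^sub>F n in sequentially. \<forall>y\<in>UNIV. dist (u n y) (U y) < e"
    proof eventually_elim
      case (elim n)
      show ?case
      proof
        fix y
        have "dist (u n y) (U y) \<le> C * \<tau> ^ n" using b[of y n] by (simp add: dist_norm norm_minus_commute)
        also have "\<dots> < e" using elim by (auto simp: dist_real_def)
        finally show "dist (u n y) (U y) < e" .
      qed
    qed
  qed
  have lim: "(\<lambda>n. u n x) \<longlonglongrightarrow> U x"
    by (rule LIMSEQ_if_dist_le_geometric[of _ _ C \<tau>]) (use b t in \<open>auto simp: norm_minus_commute\<close>)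
  have "\<forall>\<^sub>F n in sequentially. (u n \<longlongrightarrow> u n x) (at x within UNIV)"
    using c by (simp add: isCont_def)
  from swap_uniform_limit[OF this lim ul] show ?thesis by (simp add: isCont_def)
qed

section \<open>The periodised functional equation\<close>

definition funeq_rhs :: "(real \<Rightarrow> complex) \<Rightarrow> complex \<Rightarrow> (real \<Rightarrow> complex) \<Rightarrow> real \<Rightarrow> complex" where
  "funeq_rhs H s g r = H r + slash False s g r"

text \<open>The 1-periodic solutions of \<open>g = funeq_rhs H s g\<close> on \<open>(-1,1)\<close> are fixed points of
  \<open>funeq_op H s\<close>. Only the values of \<open>g\<close> at the points \<open>-1/(x - n)\<close> with \<open>0 < \<bar>x - n\<bar> < 1\<close>
  enter \<open>funeq_op H s g x\<close>, and they are damped by the weight \<open>\<bar>x - n\<bar>\<^sup>s\<close>: this makes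
  \<open>funeq_op H s\<close> a contraction that maps rationals to rationals.\<close>

definition funeq_op :: "(real \<Rightarrow> complex) \<Rightarrow> complex \<Rightarrow> (real \<Rightarrow> complex) \<Rightarrow> real \<Rightarrow> complex" where
  "funeq_op H s g = periodize (\<lambda>r. of_real (bump r) * funeq_rhs H s g r)"

lemma funeq_op_periodic: "funeq_op H s g (x + 1) = funeq_op H s g x"
  by (simp add: funeq_op_def periodize_periodic)

lemma norm_funeq_op_le:
  assumes s: "Re s > 0" and A: "\<And>r. \<bar>r\<bar> < 1 \<Longrightarrow> norm (H r) \<le> A" and B: "B \<ge> 0"
    and g: "\<And>n::int. 0 < \<bar>x - of_int n\<bar> \<Longrightarrow> \<bar>x - of_int n\<bar> < 1 \<Longrightarrow>
      norm (g (- 1 / (x - of_int n))) \<le> B"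
  shows "norm (funeq_op H s g x) \<le> A + contraction_factor (Re s) * B"
proof -
  have "norm (funeq_op H s g x) \<le> 2 * 0 + A + contraction_factor (Re s) * B"
    unfolding funeq_op_def
  proof (rule norm_periodize_bump_le[OF _ B s])
    fix r assume "r = x - of_int \<lfloor>x\<rfloor> \<or> r = x - of_int \<lfloor>x\<rfloor> - 1"
    then obtain n :: int where n: "r = x - of_int n" by (metis of_int_1 of_int_add diff_diff_eq)
    show "norm (of_real (bump r) * funeq_rhs H s g r)
        \<le> 0 + bump r * A + bump r * \<bar>r\<bar> powr Re s * B"
    proof (cases "\<bar>r\<bar> < 1")
      case True
      have "norm (slash False s g r) \<le> \<bar>r\<bar> powr Re s * B"
        by (rule norm_slash_le) (use g n True in auto)
      then have "norm (funeq_rhs H s g r) \<le> A + \<bar>r\<bar> powr Re s * B"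
        unfolding funeq_rhs_def using A[OF True] by (intro order.trans[OF norm_triangle_ineq] add_mono)
      then have "bump r * norm (funeq_rhs H s g r) \<le> bump r * (A + \<bar>r\<bar> powr Re s * B)"
        by (intro mult_left_mono bump_nonneg)
      then show ?thesis by (simp add: norm_mult bump_nonneg algebra_simps)
    qed (simp add: bump_eq_0)
  qed
  then show ?thesis by simp
qed

lemma funeq_op_contraction:
  assumes s: "Re s > 0" and B: "B \<ge> 0"
    and g: "\<And>n::int. 0 < \<bar>x - of_int n\<bar> \<Longrightarrow> \<bar>x - of_int n\<bar> < 1 \<Longrightarrow>
      norm (g1 (- 1 / (x - of_int n)) - g2 (- 1 / (x - of_int n))) \<le> B"
  shows "norm (funeq_op H s g1 x - funeq_op H s g2 x) \<le> contraction_factor (Re s) * B"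
proof -
  have "funeq_op H s g1 x - funeq_op H s g2 x = funeq_op (\<lambda>_. 0) s (\<lambda>y. g1 y - g2 y) x"
    unfolding funeq_op_def periodize_def funeq_rhs_def slash_diff by (simp add: algebra_simps)
  then show ?thesis
    using norm_funeq_op_le[of s "\<lambda>_. 0" 0 B x "\<lambda>y. g1 y - g2 y"] assms by simp
qed

lemma funeq_op_fixed:
  assumes eq: "\<And>n::int. \<bar>x - of_int n\<bar> < 1 \<Longrightarrow> F (x - of_int n) = funeq_rhs H s F (x - of_int n)"
    and per: "\<And>n::int. F (x - of_int n) = F x"
  shows "funeq_op H s F x = F x"
proof -
  define t where "t = x - of_int \<lfloor>x\<rfloor>"
  have t: "0 \<le> t" "t < 1" unfolding t_def by (auto, linarith)
  have summand: "of_real (bump (x - of_int n)) * funeq_rhs H s F (x - of_int n)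
      = of_real (bump (x - of_int n)) * F x" for n :: int
    using eq[of n] per[of n] bump_eq_0[of "x - of_int n"] by (cases "\<bar>x - of_int n\<bar> < 1") auto
  have e1: "x - of_int \<lfloor>x\<rfloor> = t" and e2: "x - of_int (\<lfloor>x\<rfloor> + 1) = t - 1"
    by (simp_all add: t_def)
  have "funeq_op H s F x = of_real (bump t) * funeq_rhs H s F t
      + of_real (bump (t - 1)) * funeq_rhs H s F (t - 1)"
    by (simp add: funeq_op_def periodize_def t_def)
  also have "\<dots> = of_real (bump t) * F x + of_real (bump (t - 1)) * F x"
    by (simp only: summand[of "\<lfloor>x\<rfloor>", unfolded e1] summand[of "\<lfloor>x\<rfloor> + 1", unfolded e2])
  also have "\<dots> = of_real (bump t + bump (t - 1)) * F x" by (simp add: algebra_simps)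
  also have "\<dots> = F x" using bump_add_bump_shift[OF t] by simp
  finally show ?thesis .
qed

section \<open>The fixed point\<close>

lemma minus_one_div_notin_Rats: "r \<notin> \<rat> \<Longrightarrow> - 1 / r \<notin> \<rat>"
  by (metis Rats_1 Rats_divide Rats_minus_iff divide_divide_eq_right div_by_1 mult_1
      nonzero_mult_div_cancel_left divide_eq_0_iff Rats_0 minus_divide_left)

lemma isCont_funeq_op_at_irrational:
  assumes Hc: "\<And>r. \<bar>r\<bar> < 1 \<Longrightarrow> r \<notin> \<rat> \<Longrightarrow> isCont H r"
    and g: "\<And>y. y \<notin> \<rat> \<Longrightarrow> isCont g y" and x: "x \<notin> \<rat>"
  shows "isCont (funeq_op H s g) x"
  unfolding funeq_op_def
proof (rule isCont_periodize)
  show "of_real (bump r) * funeq_rhs H s g r = 0" if "\<bar>r\<bar> \<ge> 1" for r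
    using that by (simp add: bump_eq_0)
  fix m :: int
  define r where "r = x - of_int m"
  have rQ: "r \<notin> \<rat>" using x unfolding r_def by (metis Rats_add Rats_of_int diff_add_cancel)
  then have r0: "r \<noteq> 0" by auto
  consider "\<bar>r\<bar> < 1" | "\<bar>r\<bar> > 1" | "\<bar>r\<bar> = 1" by linarith
  then show "isCont (\<lambda>r. of_real (bump r) * funeq_rhs H s g r) (x - of_int m)"
  proof cases
    case 1
    have "isCont (slash False s g) r"
      using isCont_slash_nonzero r0 g minus_one_div_notin_Rats[OF rQ] by blast
    then show ?thesis unfolding r_def[symmetric] funeq_rhs_def
      using Hc[OF 1 rQ] isCont_bump by (intro continuous_intros) (auto intro: isCont_o2[where g=of_real])
  next
    case 2
    have "eventually (\<lambda>y. y \<in> {y. \<bar>y\<bar> > 1}) (nhds r)"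
      using 2 by (intro eventually_nhds_in_open open_abs_gt_1) auto
    then have "eventually (\<lambda>y. 0 = of_real (bump y) * funeq_rhs H s g y) (nhds r)"
      by eventually_elim (auto simp: bump_eq_0)
    then show ?thesis unfolding r_def[symmetric] using isCont_cong continuous_const by fastforce
  next
    case 3
    then have "r \<in> \<rat>" by (metis Rats_1 Rats_minus_iff abs_if)
    with rQ show ?thesis by blast
  qed
qed

lemma funeq_op_iterates_Cauchy:
  assumes s: "Re s > 0" and A: "\<And>r. \<bar>r\<bar> < 1 \<Longrightarrow> norm (H r) \<le> A"
  defines "u n \<equiv> (funeq_op H s ^^ n) (\<lambda>_. 0)"
  shows "norm (u (Suc n) x - u n x)
    \<le> A / (1 - contraction_factor (Re s)) * contraction_factor (Re s) ^ n"
proof -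
  define \<rho> where "\<rho> = contraction_factor (Re s)"
  have \<rho>: "0 \<le> \<rho>" "\<rho> < 1" using contraction_factor_nonneg contraction_factor_lt_1 s by (auto simp: \<rho>_def)
  have "A \<ge> 0" using A[of 0] norm_ge_zero[of "H 0"] by linarith
  define M where "M = A / (1 - \<rho>)"
  have M0: "M \<ge> 0" using \<open>A \<ge> 0\<close> \<rho> by (simp add: M_def)
  have u_Suc: "u (Suc n) = funeq_op H s (u n)" for n by (simp add: u_def)
  have u_bound: "norm (u n x) \<le> M" for n x
  proof (induction n arbitrary: x)
    case (Suc n)
    have "norm (u (Suc n) x) \<le> A + \<rho> * M"
      unfolding u_Suc \<rho>_def by (rule norm_funeq_op_le[OF s A M0]) (use Suc in auto)
    also have "\<dots> = M" using \<rho> by (simp add: M_def field_simps)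
    finally show ?case .
  qed (use M0 in \<open>simp add: u_def\<close>)
  have "norm (u (Suc n) x - u n x) \<le> M * \<rho> ^ n" for n x
  proof (induction n arbitrary: x)
    case 0 then show ?case using u_bound[of 1 x] by (simp add: u_def)
  next
    case (Suc n)
    have "norm (funeq_op H s (u (Suc n)) x - funeq_op H s (u n) x) \<le> \<rho> * (M * \<rho> ^ n)"
      unfolding \<rho>_def by (rule funeq_op_contraction[OF s]) (use Suc.IH M0 \<rho> in \<open>auto simp: \<rho>_def\<close>)
    then show ?case by (simp add: u_Suc mult_ac)
  qed
  then show ?thesis by (simp add: M_def \<rho>_def)
qed

lemma funeq_op_fixed_point_exists:
  assumes s: "Re s > 0" and A: "\<And>r. \<bar>r\<bar> < 1 \<Longrightarrow> norm (H r) \<le> A"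
    and Hc: "\<And>r. \<bar>r\<bar> < 1 \<Longrightarrow> r \<notin> \<rat> \<Longrightarrow> isCont H r"
  obtains F B where "\<And>x. funeq_op H s F x = F x" "\<And>x. norm (F x) \<le> B"
    "\<And>x. x \<notin> \<rat> \<Longrightarrow> isCont F x"
proof -
  define \<rho> where "\<rho> = contraction_factor (Re s)"
  have \<rho>: "0 \<le> \<rho>" "\<rho> < 1" using contraction_factor_nonneg contraction_factor_lt_1 s by (auto simp: \<rho>_def)
  define M where "M = A / (1 - \<rho>)"
  have "A \<ge> 0" using A[of 0] norm_ge_zero[of "H 0"] by linarith
  with \<rho> have M0: "M \<ge> 0" by (simp add: M_def)
  define u where "u n = (funeq_op H s ^^ n) (\<lambda>_. 0)" for n
  have u_Suc: "u (Suc n) = funeq_op H s (u n)" for n by (simp add: u_def)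
  obtain U where U: "\<And>x. (\<lambda>n. u n x) \<longlonglongrightarrow> U x"
    "\<And>x n. norm (U x - u n x) \<le> M * \<rho> ^ n / (1 - \<rho>)"
  proof -
    have "norm (u (Suc n) x - u n x) \<le> M * \<rho> ^ n" for n x
      using funeq_op_iterates_Cauchy[where H=H, OF s A] by (simp add: u_def M_def \<rho>_def)
    with geometric_Cauchy_limit[where u=u and C=M and \<tau>=\<rho>, OF _ \<rho>] that show ?thesis by blast
  qed
  have "funeq_op H s U x = U x" for x
  proof -
    have "norm (u (Suc n) x - funeq_op H s U x) \<le> M / (1 - \<rho>) * \<rho> * \<rho> ^ n" for n
      unfolding u_Suc
      using funeq_op_contraction[OF s, of "M * \<rho> ^ n / (1 - \<rho>)" x "u n" U H] U(2) M0 \<rho>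
      by (simp add: \<rho>_def norm_minus_commute mult_ac)
    then have "(\<lambda>n. u (Suc n) x) \<longlonglongrightarrow> funeq_op H s U x"
      using \<rho> by (intro LIMSEQ_if_dist_le_geometric[of _ _ "M / (1 - \<rho>) * \<rho>" \<rho>])
    moreover have "(\<lambda>n. u (Suc n) x) \<longlonglongrightarrow> U x" using U(1) by (rule LIMSEQ_Suc)
    ultimately show ?thesis by (rule LIMSEQ_unique)
  qed
  moreover have "norm (U x) \<le> M / (1 - \<rho>)" for x
    using U(2)[of x 0] by (simp add: u_def)
  moreover have "isCont U x" if "x \<notin> \<rat>" for x
  proof (rule isCont_geometric_limit[where u=u])
    show "isCont (u n) x" for n
      using that
    proof (induction n arbitrary: x)
      case (Suc n)
      then show ?case unfolding u_Suc by (intro isCont_funeq_op_at_irrational Hc) auto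
    qed (simp add: u_def)
    show "norm (U y - u n y) \<le> M / (1 - \<rho>) * \<rho> ^ n" for n y
      using U(2)[of y n] by (simp add: divide_inverse mult_ac)
  qed (use \<rho> in auto)
  ultimately show ?thesis using that by blast
qed

lemma funeq_op_fixed_if_periodic_solution:
  assumes pF: "\<And>x. F (x + 1) = F x" and eq: "\<And>x. x \<in> {-1..1} \<Longrightarrow> F x = funeq_rhs H s F x"
  shows "funeq_op H s F x = F x"
proof (rule funeq_op_fixed)
  show "F (x - of_int n) = F x" for n :: int
    using periodic_shift_int[of F, OF pF, of x "- n"] by simp
  show "F (x - of_int n) = funeq_rhs H s F (x - of_int n)" if "\<bar>x - of_int n\<bar> < 1" for n :: int
    using that by (intro eq) auto
qed

lemma funeq_op_iterates_converge:
  assumes s: "Re s > 0" and F: "\<And>x. funeq_op H s F x = F x" "\<And>x. norm (F x) \<le> B"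
  shows "norm ((funeq_op H s ^^ n) (\<lambda>_. 0) x - F x) \<le> B * contraction_factor (Re s) ^ n"
proof (induction n arbitrary: x)
  case 0
  show ?case using F(2)[of x] by simp
next
  case (Suc n)
  have "B \<ge> 0" using F(2)[of 0] norm_ge_zero[of "F 0"] by linarith
  have "norm (funeq_op H s ((funeq_op H s ^^ n) (\<lambda>_. 0)) x - funeq_op H s F x)
      \<le> contraction_factor (Re s) * (B * contraction_factor (Re s) ^ n)"
    by (rule funeq_op_contraction) (use s Suc.IH \<open>B \<ge> 0\<close> contraction_factor_nonneg in auto)
  then show ?case by (simp add: F(1) mult_ac)
qed

lemma minus_one_div_rat_smaller_denominator:
  fixes a n :: int and q :: nat
  assumes q: "q \<ge> 1"
    and x: "0 < \<bar>of_int a / of_nat q - of_int n :: real\<bar>" "\<bar>of_int a / of_nat q - of_int n :: real\<bar> < 1"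
  obtains a' q' where "1 \<le> q'" "q' < q"
    "- 1 / (of_int a / of_nat q - of_int n) = (of_int a' / of_nat q' :: real)"
proof -
  define b where "b = a - n * int q"
  have q0: "real q > 0" using q by simp
  have xb: "of_int a / of_nat q - of_int n = of_int b / (of_nat q :: real)"
    using q0 by (simp add: b_def field_simps)
  have "b \<noteq> 0" using x xb by auto
  have "\<bar>real_of_int b\<bar> / real q < 1" using x xb q0 by (simp add: abs_divide)
  then have "\<bar>b\<bar> < int q" using q0 by (simp add: divide_less_eq)
  have "- 1 / (of_int a / of_nat q - of_int n) = (of_int (- int q * sgn b) / of_nat (nat \<bar>b\<bar>) :: real)"
    using \<open>b \<noteq> 0\<close> q0 unfolding xb by (cases "b > 0") (auto simp: field_simps)
  moreover have "1 \<le> nat \<bar>b\<bar>" "nat \<bar>b\<bar> < q" using \<open>b \<noteq> 0\<close> \<open>\<bar>b\<bar> < int q\<close> by auto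
  ultimately show ?thesis using that by blast
qed

lemma norm_le_if_funeq_op_fixed_on_Rats:
  assumes s: "Re s > 0" and A: "\<And>r. \<bar>r\<bar> < 1 \<Longrightarrow> norm (H r) \<le> A"
    and fixed: "\<And>x. x \<in> \<rat> \<Longrightarrow> funeq_op H s g x = g x" and x: "x \<in> \<rat>"
  shows "norm (g x) \<le> A / (1 - contraction_factor (Re s))"
proof -
  define \<rho> where "\<rho> = contraction_factor (Re s)"
  have \<rho>: "0 \<le> \<rho>" "\<rho> < 1" using contraction_factor_nonneg contraction_factor_lt_1 s by (auto simp: \<rho>_def)
  have "A \<ge> 0" using A[of 0] norm_ge_zero[of "H 0"] by linarith
  define M where "M = A / (1 - \<rho>)"
  have M0: "M \<ge> 0" using \<open>A \<ge> 0\<close> \<rho> by (simp add: M_def)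
  have AM: "A + \<rho> * M = M" using \<rho> by (simp add: M_def field_simps)
  have "\<forall>a. norm (g (of_int a / of_nat q)) \<le> M" if "q \<ge> 1" for q
    using that
  proof (induction q rule: less_induct)
    case (less q)
    show ?case
    proof
      fix a :: int
      have "norm (funeq_op H s g (of_int a / of_nat q)) \<le> A + \<rho> * M"
        unfolding \<rho>_def
      proof (rule norm_funeq_op_le[OF s A M0])
        fix n :: int
        assume "0 < \<bar>of_int a / of_nat q - of_int n :: real\<bar>" "\<bar>of_int a / of_nat q - of_int n :: real\<bar> < 1"
        with less.prems obtain a' q' where "1 \<le> q'" "q' < q"
          "- 1 / (of_int a / of_nat q - of_int n) = (of_int a' / of_nat q' :: real)"
          by (rule minus_one_div_rat_smaller_denominator)
        with less.IH show "norm (g (- 1 / (of_int a / of_nat q - of_int n))) \<le> M" by simp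
      qed
      then show "norm (g (of_int a / of_nat q)) \<le> M" using fixed[of "of_int a / of_nat q"] AM by simp
    qed
  qed
  moreover obtain a b :: int where "b > 0" "x = of_int a / of_int b" using Rats_cases'[OF x] by metis
  then have "x = of_int a / of_nat (nat b)" "nat b \<ge> 1" by simp_all
  ultimately show ?thesis unfolding M_def \<rho>_def by metis
qed

lemma funeq_op_fixed_points_agree_on_Rats:
  assumes s: "Re s > 0"
    and g1: "\<And>x. x \<in> \<rat> \<Longrightarrow> funeq_op H s g1 x = g1 x" "\<And>x. x \<in> \<rat> \<Longrightarrow> norm (g1 x) \<le> B1"
    and g2: "\<And>x. x \<in> \<rat> \<Longrightarrow> funeq_op H s g2 x = g2 x" "\<And>x. x \<in> \<rat> \<Longrightarrow> norm (g2 x) \<le> B2"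
    and x: "x \<in> \<rat>"
  shows "g1 x = g2 x"
proof -
  define \<rho> where "\<rho> = contraction_factor (Re s)"
  have \<rho>: "0 \<le> \<rho>" "\<rho> < 1" using contraction_factor_nonneg contraction_factor_lt_1 s by (auto simp: \<rho>_def)
  have "B1 + B2 \<ge> 0"
    using g1(2)[OF Rats_0] g2(2)[OF Rats_0] norm_ge_zero[of "g1 0"] norm_ge_zero[of "g2 0"] by linarith
  have "\<forall>x\<in>\<rat>. norm (g1 x - g2 x) \<le> (B1 + B2) * \<rho> ^ n" for n
  proof (induction n)
    case 0
    show ?case
      using g1(2) g2(2) by (auto intro: order.trans[OF norm_triangle_ineq4] add_mono)
  next
    case (Suc n)
    show ?case
    proof
      fix x :: real assume x: "x \<in> \<rat>"
      have "norm (funeq_op H s g1 x - funeq_op H s g2 x) \<le> \<rho> * ((B1 + B2) * \<rho> ^ n)"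
        unfolding \<rho>_def
      proof (rule funeq_op_contraction[OF s])
        show "0 \<le> (B1 + B2) * contraction_factor (Re s) ^ n"
          using \<open>B1 + B2 \<ge> 0\<close> \<rho> by (simp add: \<rho>_def)
        fix m :: int assume "0 < \<bar>x - of_int m\<bar>"
        then have "- 1 / (x - of_int m) \<in> \<rat>" using x by (intro Rats_divide) auto
        with Suc.IH show "norm (g1 (- 1 / (x - of_int m)) - g2 (- 1 / (x - of_int m)))
            \<le> (B1 + B2) * contraction_factor (Re s) ^ n"
          by (simp add: \<rho>_def)
      qed
      then show "norm (g1 x - g2 x) \<le> (B1 + B2) * \<rho> ^ Suc n"
        using g1(1)[OF x] g2(1)[OF x] by (simp add: mult_ac)
    qed
  qed
  then have "norm (g1 x - g2 x) \<le> 0" using x by (intro nonpos_if_le_geometric[OF _ \<rho>]) auto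
  then show ?thesis by simp
qed

section \<open>Differentiating the fixed point\<close>

definition funeq_rhs_deriv ::
    "(real \<Rightarrow> complex) \<Rightarrow> complex \<Rightarrow> (real \<Rightarrow> complex) \<Rightarrow> (real \<Rightarrow> complex) \<Rightarrow> real \<Rightarrow> complex" where
  "funeq_rhs_deriv H' s g d r = H' r + s * slash True (s - 1) g r + slash False (s - 2) d r"

definition funeq_op_deriv :: "(real \<Rightarrow> complex) \<Rightarrow> (real \<Rightarrow> complex) \<Rightarrow> complex \<Rightarrow>
    (real \<Rightarrow> complex) \<Rightarrow> (real \<Rightarrow> complex) \<Rightarrow> real \<Rightarrow> complex" where
  "funeq_op_deriv H H' s g d = periodize (\<lambda>r. of_real (bump' r) * funeq_rhs H s g r
      + of_real (bump r) * funeq_rhs_deriv H' s g d r)"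

lemma funeq_rhs_has_vector_derivative:
  assumes "Re s > 1" "(H has_vector_derivative H' r) (at r)"
    and "\<And>y. norm (g y) \<le> B" "\<And>y. (g has_vector_derivative d y) (at y)"
  shows "(funeq_rhs H s g has_vector_derivative funeq_rhs_deriv H' s g d r) (at r)"
  using has_vector_derivative_add[OF assms(2) slash_has_vector_derivative[OF assms(1,3,4), of False]]
  unfolding funeq_rhs_def[abs_def] funeq_rhs_deriv_def by (simp add: add.assoc)

lemma norm_funeq_rhs_le:
  assumes "\<bar>r\<bar> \<le> 1" "Re s \<ge> 0" "norm (H r) \<le> MH" "\<And>y. norm (g y) \<le> Bg"
  shows "norm (funeq_rhs H s g r) \<le> MH + Bg"
  unfolding funeq_rhs_def
  using assms norm_slash_le_bound[OF assms(1,2,4)] by (intro order.trans[OF norm_triangle_ineq] add_mono)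

lemma norm_funeq_rhs_deriv_le:
  assumes "\<bar>r\<bar> \<le> 1" "Re s \<ge> 2" "norm (H' r) \<le> MH'"
    and "\<And>y. norm (g y) \<le> Bg" "\<And>y. norm (d y) \<le> Bd"
  shows "norm (funeq_rhs_deriv H' s g d r) \<le> MH' + norm s * Bg + Bd"
proof -
  have "norm (funeq_rhs_deriv H' s g d r)
      \<le> norm (H' r) + norm s * norm (slash True (s - 1) g r) + norm (slash False (s - 2) d r)"
    unfolding funeq_rhs_deriv_def norm_mult[symmetric]
    by (meson norm_triangle_ineq order.trans add_mono order.refl)
  also have "\<dots> \<le> MH' + norm s * Bg + Bd"
    using assms norm_slash_le_bound[OF assms(1) _ assms(4), of "s - 1" True]
      norm_slash_le_bound[OF assms(1) _ assms(5), of "s - 2" False]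
    by (intro add_mono mult_left_mono) auto
  finally show ?thesis .
qed

lemma funeq_op_has_vector_derivative:
  assumes s: "Re s > 2"
    and dH: "\<And>r. \<bar>r\<bar> < 1 \<Longrightarrow> (H has_vector_derivative H' r) (at r)"
    and MH: "\<And>r. \<bar>r\<bar> < 1 \<Longrightarrow> norm (H r) \<le> MH"
    and dg: "\<And>y. (g has_vector_derivative d y) (at y)" and Bg: "\<And>y. norm (g y) \<le> Bg"
  shows "(funeq_op H s g has_vector_derivative funeq_op_deriv H H' s g d x) (at x)"
  unfolding funeq_op_def funeq_op_deriv_def
proof (rule periodize_has_vector_derivative)
  fix n :: int
  show "((\<lambda>r. of_real (bump r) * funeq_rhs H s g r) has_vector_derivative
      of_real (bump' (x - of_int n)) * funeq_rhs H s g (x - of_int n)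
      + of_real (bump (x - of_int n)) * funeq_rhs_deriv H' s g d (x - of_int n)) (at (x - of_int n))"
  proof (rule bump_mult_has_vector_derivative)
    show "(funeq_rhs H s g has_vector_derivative funeq_rhs_deriv H' s g d r) (at r)" if "\<bar>r\<bar> < 1" for r
      using s dH[OF that] Bg dg by (intro funeq_rhs_has_vector_derivative) auto
    show "norm (funeq_rhs H s g r) \<le> MH + Bg" if "\<bar>r\<bar> < 1" for r
      using that s MH[OF that] Bg by (intro norm_funeq_rhs_le) auto
  qed
qed (auto simp: bump_eq_0 bump'_eq_0)

lemma isCont_funeq_op_deriv:
  assumes s: "Re s > 2"
    and cH: "\<And>r. \<bar>r\<bar> < 1 \<Longrightarrow> isCont H r" and cH': "\<And>r. \<bar>r\<bar> < 1 \<Longrightarrow> isCont H' r"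
    and MH: "\<And>r. \<bar>r\<bar> < 1 \<Longrightarrow> norm (H r) \<le> MH" and MH': "\<And>r. \<bar>r\<bar> < 1 \<Longrightarrow> norm (H' r) \<le> MH'"
    and cg: "\<And>y. isCont g y" and Bg: "\<And>y. norm (g y) \<le> Bg"
    and cd: "\<And>y. isCont d y" and Bd: "\<And>y. norm (d y) \<le> Bd"
  shows "isCont (funeq_op_deriv H H' s g d) x"
  unfolding funeq_op_deriv_def
proof (rule isCont_periodize)
  have rhs: "isCont (funeq_rhs H s g) r" "norm (funeq_rhs H s g r) \<le> MH + Bg" if "\<bar>r\<bar> < 1" for r
  proof -
    show "isCont (funeq_rhs H s g) r"
      unfolding funeq_rhs_def[abs_def]
      using s cH[OF that] isCont_slash[OF _ Bg cg, where s=s and e=False and r=r]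
      by (intro continuous_intros) auto
    show "norm (funeq_rhs H s g r) \<le> MH + Bg"
      using that s MH[OF that] Bg by (intro norm_funeq_rhs_le) auto
  qed
  have rhs': "isCont (funeq_rhs_deriv H' s g d) r"
    "norm (funeq_rhs_deriv H' s g d r) \<le> MH' + norm s * Bg + Bd" if "\<bar>r\<bar> < 1" for r
  proof -
    show "isCont (funeq_rhs_deriv H' s g d) r"
      unfolding funeq_rhs_deriv_def[abs_def]
      using s cH'[OF that] isCont_slash[OF _ Bg cg, where s="s - 1" and e=True and r=r]
        isCont_slash[OF _ Bd cd, where s="s - 2" and e=False and r=r]
      by (intro continuous_intros) auto
    show "norm (funeq_rhs_deriv H' s g d r) \<le> MH' + norm s * Bg + Bd"
      using that s MH'[OF that] Bg Bd by (intro norm_funeq_rhs_deriv_le) auto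
  qed
  fix n :: int
  have "isCont (\<lambda>r. of_real (bump' r) * funeq_rhs H s g r) (x - of_int n)"
    by (rule isCont_of_real_mult_cutoff[OF isCont_bump']) (use rhs in \<open>auto simp: bump'_eq_0\<close>)
  moreover have "isCont (\<lambda>r. of_real (bump r) * funeq_rhs_deriv H' s g d r) (x - of_int n)"
    by (rule isCont_of_real_mult_cutoff[OF isCont_bump]) (use rhs' in \<open>auto simp: bump_eq_0\<close>)
  ultimately show "isCont (\<lambda>r. of_real (bump' r) * funeq_rhs H s g r
      + of_real (bump r) * funeq_rhs_deriv H' s g d r) (x - of_int n)"
    by (rule continuous_add)
qed (auto simp: bump_eq_0 bump'_eq_0)

lemma norm_funeq_op_deriv_le:
  assumes s: "Re s > 2"
    and MH: "\<And>r. \<bar>r\<bar> < 1 \<Longrightarrow> norm (H r) \<le> MH" and MH': "\<And>r. \<bar>r\<bar> < 1 \<Longrightarrow> norm (H' r) \<le> MH'"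
    and Bg: "\<And>y. norm (g y) \<le> Bg" and Bd: "\<And>y. norm (d y) \<le> Bd"
  shows "norm (funeq_op_deriv H H' s g d x) \<le> pi * (MH + Bg) + (MH' + norm s * Bg + Bd)"
proof -
  have "MH + Bg \<ge> 0"
    using MH[of 0] Bg[of 0] norm_ge_zero[of "H 0"] norm_ge_zero[of "g 0"] by linarith
  have "norm (funeq_op_deriv H H' s g d x)
      \<le> 2 * (pi / 2 * (MH + Bg)) + (MH' + norm s * Bg + Bd) + contraction_factor (Re s) * 0"
    unfolding funeq_op_deriv_def
  proof (rule norm_periodize_bump_le)
    fix r
    show "norm (of_real (bump' r) * funeq_rhs H s g r + of_real (bump r) * funeq_rhs_deriv H' s g d r)
        \<le> pi / 2 * (MH + Bg) + bump r * (MH' + norm s * Bg + Bd) + bump r * \<bar>r\<bar> powr Re s * 0"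
    proof (cases "\<bar>r\<bar> < 1")
      case True
      have "norm (funeq_rhs H s g r) \<le> MH + Bg"
        using True s MH[OF True] Bg by (intro norm_funeq_rhs_le) auto
      moreover have "norm (funeq_rhs_deriv H' s g d r) \<le> MH' + norm s * Bg + Bd"
        using True s MH'[OF True] Bg Bd by (intro norm_funeq_rhs_deriv_le) auto
      ultimately have "\<bar>bump' r\<bar> * norm (funeq_rhs H s g r) + bump r * norm (funeq_rhs_deriv H' s g d r)
          \<le> pi / 2 * (MH + Bg) + bump r * (MH' + norm s * Bg + Bd)"
        using abs_bump'_le[of r] bump_nonneg[of r] \<open>MH + Bg \<ge> 0\<close>
        by (intro add_mono mult_mono mult_left_mono) auto
      then show ?thesis
        by (intro order.trans[OF norm_triangle_ineq]) (simp add: norm_mult bump_nonneg)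
    qed (use \<open>MH + Bg \<ge> 0\<close> in \<open>simp add: bump_eq_0 bump'_eq_0\<close>)
  qed (use s in auto)
  then show ?thesis by simp
qed

lemma norm_funeq_op_deriv_diff_le:
  assumes s: "Re s > 2" and dg: "\<And>y. norm (ga y - gb y) \<le> \<delta>g" and dd: "\<And>y. norm (da y - db y) \<le> \<delta>d"
  shows "norm (funeq_op_deriv H H' s ga da x - funeq_op_deriv H H' s gb db x) \<le> (pi + norm s) * \<delta>g + contraction_factor (Re s - 2) * \<delta>d"
proof -
  have dg0: "\<delta>g \<ge> 0" using dg[of 0] norm_ge_zero order.trans by blast
  have dd0: "\<delta>d \<ge> 0" using dd[of 0] norm_ge_zero order.trans by blast
  define G where "G y = ga y - gb y" for y
  define D where "D y = da y - db y" for y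
  define Q where "Q r = of_real (bump' r) * slash False s G r + of_real (bump r) * (s * slash True (s - 1) G r + slash False (s - 2) D r)" for r
  have eq: "funeq_op_deriv H H' s ga da x - funeq_op_deriv H H' s gb db x = periodize Q x"
    unfolding funeq_op_deriv_def periodize_def funeq_rhs_def funeq_rhs_deriv_def Q_def G_def D_def slash_diff by (simp add: algebra_simps)
  have "norm (periodize Q x) \<le> 2 * (pi / 2 * \<delta>g) + norm s * \<delta>g + contraction_factor (Re s - 2) * \<delta>d"
  proof (rule norm_periodize_bump_le)
    fix r
    show "norm (Q r) \<le> pi / 2 * \<delta>g + bump r * (norm s * \<delta>g) + bump r * \<bar>r\<bar> powr (Re s - 2) * \<delta>d"
    proof (cases "\<bar>r\<bar> < 1")
      case True
      have z1: "norm (slash False s G r) \<le> \<delta>g" by (rule norm_slash_le_bound) (use True s dg in \<open>auto simp: G_def\<close>)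
      have z2: "norm (slash True (s - 1) G r) \<le> \<delta>g" by (rule norm_slash_le_bound) (use True s dg in \<open>auto simp: G_def\<close>)
      have z3: "norm (slash False (s - 2) D r) \<le> \<bar>r\<bar> powr Re (s - 2) * \<delta>d" by (rule norm_slash_le) (use dd in \<open>auto simp: D_def\<close>)
      have "norm (Q r) \<le> \<bar>bump' r\<bar> * norm (slash False s G r) + bump r * (norm s * norm (slash True (s - 1) G r) + norm (slash False (s - 2) D r))"
        unfolding Q_def
        by (rule order.trans[OF norm_triangle_ineq])
           (auto simp: norm_mult bump_nonneg intro!: add_mono mult_left_mono order.trans[OF norm_triangle_ineq])
      also have "\<dots> \<le> pi / 2 * \<delta>g + bump r * (norm s * \<delta>g + \<bar>r\<bar> powr (Re s - 2) * \<delta>d)"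
        using abs_bump'_le[of r] z1 z2 z3 bump_nonneg[of r] dg0
        by (intro add_mono mult_mono mult_left_mono) auto
      finally show ?thesis by (simp add: algebra_simps)
    next
      case False then show ?thesis using bump_eq_0[of r] bump'_eq_0[of r] dg0 by (simp add: Q_def)
    qed
  qed (use dd0 s in auto)
  then show ?thesis using eq by (simp add: algebra_simps)
qed

lemma has_vector_derivative_geometric_limit:
  fixes g d :: "nat \<Rightarrow> real \<Rightarrow> complex"
  assumes g: "\<And>x. (\<lambda>n. g n x) \<longlonglongrightarrow> F x"
    and dg: "\<And>n x. (g n has_vector_derivative d n x) (at x)" and cd: "\<And>n x. isCont (d n) x"
    and D: "\<And>n x. norm (D x - d n x) \<le> C * \<tau> ^ n" and \<tau>: "0 \<le> \<tau>" "\<tau> < 1"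
  shows "(F has_vector_derivative D x) (at x)" and "isCont D x"
proof -
  have "\<exists>G. \<forall>x\<in>UNIV. (\<lambda>n. g n x) \<longlonglongrightarrow> G x \<and> (G has_derivative (\<lambda>h. h *\<^sub>R D x)) (at x within UNIV)"
  proof (rule has_derivative_sequence[where f'="\<lambda>n x h. h *\<^sub>R d n x"])
    show "\<And>n x. x \<in> UNIV \<Longrightarrow> (g n has_derivative (\<lambda>h. h *\<^sub>R d n x)) (at x within UNIV)"
      using dg by (auto simp: has_vector_derivative_def)
    show "\<forall>\<^sub>F n in sequentially. \<forall>x\<in>UNIV. \<forall>h. norm (h *\<^sub>R d n x - h *\<^sub>R D x) \<le> e * norm h"
      if e: "e > 0" for e
    proof -
      have "(\<lambda>n. C * \<tau> ^ n) \<longlonglongrightarrow> C * 0"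
        by (intro tendsto_mult tendsto_const LIMSEQ_power_zero) (use \<tau> in auto)
      then have "eventually (\<lambda>n. C * \<tau> ^ n < e) sequentially"
        using e by (simp add: order_tendsto_iff)
      then show ?thesis
      proof eventually_elim
        case (elim n)
        show ?case
        proof (intro ballI allI)
          fix x h :: real
          have "norm (h *\<^sub>R d n x - h *\<^sub>R D x) = \<bar>h\<bar> * norm (D x - d n x)"
            by (simp add: scaleR_diff_right[symmetric] norm_minus_commute)
          also have "\<dots> \<le> \<bar>h\<bar> * e"
            using D[of x n] elim by (intro mult_left_mono) auto
          finally show "norm (h *\<^sub>R d n x - h *\<^sub>R D x) \<le> e * norm h" by (simp add: mult.commute)
        qed
      qed
    qed
    show "(\<lambda>n. g n 0) \<longlonglongrightarrow> F 0" by (rule g)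
  qed auto
  then obtain G where G: "\<And>x. (\<lambda>n. g n x) \<longlonglongrightarrow> G x" "\<And>x. (G has_derivative (\<lambda>h. h *\<^sub>R D x)) (at x)"
    by auto
  have "G = F" using G(1) g LIMSEQ_unique by (intro ext) blast
  with G(2) show "(F has_vector_derivative D x) (at x)" by (simp add: has_vector_derivative_def)
  show "isCont D x" by (rule isCont_geometric_limit[where u=d, OF cd D \<tau>])
qed

lemma C1_on_Icc_interior:
  fixes H H' :: "real \<Rightarrow> complex"
  assumes dH: "\<And>x. x \<in> {-1..1} \<Longrightarrow> (H has_vector_derivative H' x) (at x within {-1..1})"
    and cH': "continuous_on {-1..1} H'"
  obtains MH MH' where "\<And>r. \<bar>r\<bar> < 1 \<Longrightarrow> (H has_vector_derivative H' r) (at r)"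
    "\<And>r. \<bar>r\<bar> < 1 \<Longrightarrow> isCont H' r"
    "\<And>r. \<bar>r\<bar> < 1 \<Longrightarrow> norm (H r) \<le> MH" "\<And>r. \<bar>r\<bar> < 1 \<Longrightarrow> norm (H' r) \<le> MH'"
proof -
  have interior: "at r within {-1..1} = at r" if "\<bar>r\<bar> < 1" for r :: real
    using that by (intro at_within_interior) (auto simp: abs_less_iff interior_atLeastAtMost_real)
  have "continuous_on {-1..1} H"
    using dH has_vector_derivative_continuous continuous_on_eq_continuous_within by blast
  then obtain MH where MH: "\<And>x. x \<in> {-1..1} \<Longrightarrow> norm (H x) \<le> MH"
    using continuous_on_compact_bound[OF compact_Icc] by blast
  obtain MH' where MH': "\<And>x. x \<in> {-1..1} \<Longrightarrow> norm (H' x) \<le> MH'"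
    using continuous_on_compact_bound[OF compact_Icc cH'] by blast
  have "(H has_vector_derivative H' r) (at r)" if "\<bar>r\<bar> < 1" for r
    using dH[of r] interior[OF that] that by (simp add: abs_less_iff)
  moreover have "isCont H' r" if "\<bar>r\<bar> < 1" for r
  proof -
    have "continuous (at r within {-1..1}) H'"
      using cH' that by (simp add: continuous_on_eq_continuous_within abs_less_iff)
    then show ?thesis using interior[OF that] by simp
  qed
  ultimately show ?thesis
    by (rule that[where MH=MH and MH'=MH']) (use MH MH' in \<open>auto simp: abs_less_iff\<close>)
qed

lemma funeq_op_deriv_iterates_regular:
  assumes s: "Re s > 2"
    and dH: "\<And>r. \<bar>r\<bar> < 1 \<Longrightarrow> (H has_vector_derivative H' r) (at r)"
    and cH': "\<And>r. \<bar>r\<bar> < 1 \<Longrightarrow> isCont H' r"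
    and MH: "\<And>r. \<bar>r\<bar> < 1 \<Longrightarrow> norm (H r) \<le> MH" and MH': "\<And>r. \<bar>r\<bar> < 1 \<Longrightarrow> norm (H' r) \<le> MH'"
  defines "gd n \<equiv> ((\<lambda>(g, d). (funeq_op H s g, funeq_op_deriv H H' s g d)) ^^ n) (\<lambda>_. 0, \<lambda>_. 0)"
  shows "(\<forall>x. (fst (gd n) has_vector_derivative snd (gd n) x) (at x)) \<and> (\<forall>x. isCont (snd (gd n)) x)
    \<and> (\<exists>B. \<forall>x. norm (fst (gd n) x) \<le> B) \<and> (\<exists>B. \<forall>x. norm (snd (gd n) x) \<le> B)"
proof (induction n)
  case 0
  show ?case by (auto simp: gd_def intro: has_vector_derivative_const)
next
  case (Suc n)
  define g d where "g = fst (gd n)" and "d = snd (gd n)"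
  have gd_Suc: "gd (Suc n) = (funeq_op H s g, funeq_op_deriv H H' s g d)"
    by (simp add: gd_def g_def d_def case_prod_beta)
  from Suc obtain Bg Bd where dg: "\<And>x. (g has_vector_derivative d x) (at x)"
    and cd: "\<And>x. isCont d x" and Bg: "\<And>x. norm (g x) \<le> Bg" and Bd: "\<And>x. norm (d x) \<le> Bd"
    unfolding g_def d_def by blast
  have "Bg \<ge> 0" using Bg[of 0] norm_ge_zero[of "g 0"] by linarith
  have "norm (funeq_op H s g x) \<le> MH + contraction_factor (Re s) * Bg" for x
    by (rule norm_funeq_op_le) (use s MH Bg \<open>Bg \<ge> 0\<close> in auto)
  moreover have "norm (funeq_op_deriv H H' s g d x) \<le> pi * (MH + Bg) + (MH' + norm s * Bg + Bd)" for x
    by (rule norm_funeq_op_deriv_le[OF s MH MH' Bg Bd])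
  moreover have "(funeq_op H s g has_vector_derivative funeq_op_deriv H H' s g d x) (at x)" for x
    by (rule funeq_op_has_vector_derivative[OF s dH MH dg Bg])
  moreover have "isCont (funeq_op_deriv H H' s g d) x" for x
    by (intro isCont_funeq_op_deriv[OF s _ cH' MH MH' _ Bg cd Bd]
        has_vector_derivative_continuous[OF dH] has_vector_derivative_continuous[OF dg])
  ultimately show ?case unfolding gd_Suc by auto
qed

text \<open>The iterates of \<open>funeq_op\<close> starting from \<open>0\<close> converge to the solution \<open>F\<close>; their
  derivatives are the iterates of \<open>funeq_op_deriv\<close>, a contraction up to a perturbation that
  decays with the iterates themselves, so they converge geometrically too.\<close>

lemma funeq_solution_differentiable:
  assumes s: "Re s > 2"
    and dH: "\<And>x. x \<in> {-1..1} \<Longrightarrow> (H has_vector_derivative H' x) (at x within {-1..1})"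
    and cH': "continuous_on {-1..1} H'"
    and cF: "\<And>x. isCont F x" and pF: "\<And>x. F (x + 1) = F x"
    and eq: "\<And>x. x \<in> {-1..1} \<Longrightarrow> F x = funeq_rhs H s F x"
  obtains F' where "\<And>x. (F has_vector_derivative F' x) (at x)" "\<And>x. isCont F' x"
proof -
  obtain MH MH' where H: "\<And>r. \<bar>r\<bar> < 1 \<Longrightarrow> (H has_vector_derivative H' r) (at r)"
    "\<And>r. \<bar>r\<bar> < 1 \<Longrightarrow> isCont H' r"
    "\<And>r. \<bar>r\<bar> < 1 \<Longrightarrow> norm (H r) \<le> MH" "\<And>r. \<bar>r\<bar> < 1 \<Longrightarrow> norm (H' r) \<le> MH'"
    using C1_on_Icc_interior[OF dH cH'] by blast
  obtain BF where BF: "\<And>x. norm (F x) \<le> BF"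
    using periodic_bounded[of F] pF cF continuous_at_imp_continuous_on by blast
  have "BF \<ge> 0" using BF[of 0] norm_ge_zero[of "F 0"] by linarith
  define \<rho>1 where "\<rho>1 = contraction_factor (Re s)"
  define \<rho>2 where "\<rho>2 = contraction_factor (Re s - 2)"
  define \<tau> where "\<tau> = (1 + max \<rho>1 \<rho>2) / 2"
  have \<rho>: "0 \<le> \<rho>1" "\<rho>1 < 1" "0 \<le> \<rho>2" "\<rho>2 < 1"
    using contraction_factor_nonneg contraction_factor_lt_1 s by (auto simp: \<rho>1_def \<rho>2_def)
  then have \<tau>: "\<rho>1 < \<tau>" "\<rho>2 < \<tau>" "0 \<le> \<tau>" "\<tau> < 1" by (auto simp: \<tau>_def)
  define gd where "gd n = ((\<lambda>(g, d). (funeq_op H s g, funeq_op_deriv H H' s g d)) ^^ n)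
      (\<lambda>_. 0, \<lambda>_. 0)" for n
  define g d where "g n = fst (gd n)" and "d n = snd (gd n)" for n
  have g_Suc: "g (Suc n) = funeq_op H s (g n)" and d_Suc: "d (Suc n) = funeq_op_deriv H H' s (g n) (d n)"
    for n by (simp_all add: g_def d_def gd_def case_prod_beta)
  have regular: "(\<forall>x. (g n has_vector_derivative d n x) (at x)) \<and> (\<forall>x. isCont (d n) x)
      \<and> (\<exists>B. \<forall>x. norm (d n x) \<le> B)" for n
    using funeq_op_deriv_iterates_regular[OF s H, of n] unfolding g_def d_def gd_def by blast
  have "g n = (funeq_op H s ^^ n) (\<lambda>_. 0)" for n
    by (induction n) (simp_all add: g_Suc, simp add: g_def gd_def)
  then have g_F: "norm (g n x - F x) \<le> BF * \<rho>1 ^ n" for n x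
    using funeq_op_iterates_converge[OF _ funeq_op_fixed_if_periodic_solution[OF pF eq] BF] s
    by (simp add: \<rho>1_def)
  have g_step: "norm (g (Suc n) x - g n x) \<le> 2 * BF * \<rho>1 ^ n" for n x
    using norm_diff_triangle_le[OF g_F[of "Suc n" x] g_F[of n x, unfolded norm_minus_commute]]
      mult_left_mono[OF power_decreasing[of n "Suc n" \<rho>1] \<open>BF \<ge> 0\<close>] \<rho> by auto
  obtain Bd1 where Bd1: "\<And>x. norm (d 1 x) \<le> Bd1" using regular[of 1] by blast
  have d_step: "norm (d (Suc n) x - d n x) \<le> max Bd1 ((pi + norm s) * (2 * BF) / (\<tau> - \<rho>2)) * \<tau> ^ n"
    for n x
  proof (rule perturbed_contraction_geometric_decay[where e="\<lambda>n x. norm (d (Suc n) x - d n x)"])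
    show "norm (d (Suc 0) x - d 0 x) \<le> Bd1" for x using Bd1[of x] by (simp add: d_def gd_def)
    show "norm (d (Suc (Suc n)) x - d (Suc n) x) \<le> (pi + norm s) * (2 * BF) * \<rho>1 ^ n + \<rho>2 * c"
      if "\<And>y. norm (d (Suc n) y - d n y) \<le> c" for n c x
      using norm_funeq_op_deriv_diff_le[where ga="g (Suc n)" and gb="g n" and da="d (Suc n)"
          and db="d n" and H=H and H'=H' and x=x, OF s g_step that]
      unfolding d_Suc[of "Suc n"] d_Suc[of n] g_Suc \<rho>2_def by (simp add: algebra_simps)
  qed (use \<open>BF \<ge> 0\<close> \<rho> \<tau> in auto)
  then obtain D where "\<And>x n. norm (D x - d n x)
      \<le> max Bd1 ((pi + norm s) * (2 * BF) / (\<tau> - \<rho>2)) * \<tau> ^ n / (1 - \<tau>)"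
    using geometric_Cauchy_limit[where u=d, OF _ \<tau>(3,4)] by blast
  then have D: "norm (D x - d n x) \<le> max Bd1 ((pi + norm s) * (2 * BF) / (\<tau> - \<rho>2)) / (1 - \<tau>) * \<tau> ^ n"
    for n x by (simp add: field_simps)
  have g_lim: "(\<lambda>n. g n x) \<longlonglongrightarrow> F x" for x
    by (rule LIMSEQ_if_dist_le_geometric[of _ _ BF \<rho>1]) (use g_F \<rho> in auto)
  have dg: "(g n has_vector_derivative d n x) (at x)" and cd: "isCont (d n) x" for n x
    using regular by blast+
  show ?thesis
    using has_vector_derivative_geometric_limit[OF g_lim dg cd D \<tau>(3,4)] that by blast
qed

lemma funeq_solution_derivative_funeq:
  assumes s: "Re s > 1"
    and dH: "\<And>x. x \<in> {-1..1} \<Longrightarrow> (H has_vector_derivative H' x) (at x within {-1..1})"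
    and BF: "\<And>x. norm (F x) \<le> B" and dF: "\<And>x. (F has_vector_derivative F' x) (at x)"
    and eq: "\<And>x. x \<in> {-1..1} \<Longrightarrow> F x = funeq_rhs H s F x" and x: "x \<in> {-1..1}"
  shows "F' x = funeq_rhs (\<lambda>y. H' y + s * slash True (s - 1) F y) (s - 2) F' x"
proof -
  from slash_has_vector_derivative[OF s BF dF, of False x]
  have "(slash False s F has_vector_derivative
      s * slash True (s - 1) F x + slash False (s - 2) F' x) (at x)"
    by simp
  then have "((\<lambda>y. H y + slash False s F y) has_vector_derivative
      H' x + (s * slash True (s - 1) F x + slash False (s - 2) F' x)) (at x within {-1..1})"
    by (rule has_vector_derivative_add[OF dH[OF x] has_vector_derivative_at_within])
  then have "(F has_vector_derivative
      H' x + (s * slash True (s - 1) F x + slash False (s - 2) F' x)) (at x within {-1..1})"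
    by (rule has_vector_derivative_transform_within[OF _ zero_less_one x])
      (use eq in \<open>auto simp: funeq_rhs_def\<close>)
  moreover have "at x within {-1..1} \<noteq> bot"
    using x trivial_limit_within[of x "{-1..1::real}"] islimpt_Icc[of "-1" 1 x] by auto
  ultimately have "F' x = H' x + (s * slash True (s - 1) F x + slash False (s - 2) F' x)"
    using vector_derivative_unique_within has_vector_derivative_at_within[OF dF] by blast
  then show ?thesis by (simp add: funeq_rhs_def algebra_simps)
qed

text \<open>Differentiating \<open>F = H + slash F\<close> gives \<open>F' = (H' + s slash\<^sub>\<plusminus> F) + slash F'\<close> with weight \<open>s - 2\<close>:
  an equation of the same shape, so induction on \<open>m\<close> applies.\<close>

lemma funeq_solution_Cm:
  assumes "2 * real m < Re s" and "Cm_on m {-1..1} H"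
    and "\<And>x. isCont F x" and "\<And>x. F (x + 1) = F x"
    and "\<And>x. x \<in> {-1..1} \<Longrightarrow> F x = funeq_rhs H s F x"
  shows "Cm_on m UNIV F"
  using assms
proof (induction m arbitrary: s H F)
  case 0
  then show ?case by (simp add: Cm_on_0_iff continuous_at_imp_continuous_on)
next
  case (Suc m)
  note s = Suc.prems(1) and HC = Suc.prems(2) and cF = Suc.prems(3) and pF = Suc.prems(4)
    and eq = Suc.prems(5)
  obtain H' where dH: "\<And>x. x \<in> {-1..1} \<Longrightarrow> (H has_vector_derivative H' x) (at x within {-1..1})"
    and H'C: "Cm_on m {-1..1} H'"
    using Cm_on_SucE[OF HC] by blast
  have cH': "continuous_on {-1..1} H'" using Cm_on_mono[OF H'C, of 0] by (simp add: Cm_on_0_iff)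
  have "Re s > 2" using s by simp
  obtain F' where dF: "\<And>x. (F has_vector_derivative F' x) (at x)" and cF': "\<And>x. isCont F' x"
    using funeq_solution_differentiable[OF \<open>Re s > 2\<close> dH cH' cF pF eq] by blast
  have FC: "Cm_on m UNIV F"
    using Suc.IH[of s H F] s Cm_on_mono[OF HC, of m] cF pF eq by auto
  then have FB: "bounded_Cm m F" by (rule periodic_Cm_imp_bounded_Cm) (rule pF)
  then obtain BF where BF: "\<And>x. norm (F x) \<le> BF" "\<And>x. isCont F x"
    using bounded_Cm_imp_bounded by blast
  have pF': "F' (x + 1) = F' x" for x by (rule periodic_derivative[of F F']) (use pF dF in auto)
  define H1 where "H1 x = H' x + s * slash True (s - 1) F x" for x
  have eqF': "F' x = funeq_rhs H1 (s - 2) F' x" if "x \<in> {-1..1}" for x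
    unfolding H1_def using s that by (intro funeq_solution_derivative_funeq[OF _ dH BF(1) dF eq]) auto
  have "Cm_on m {-1..1} H1"
    unfolding H1_def using s FB by (intro Cm_on_add Cm_on_cmult H'C Cm_on_slash) auto
  then have "Cm_on m UNIV F'"
    using Suc.IH[of "s - 2" H1 F'] s cF' pF' eqF' by auto
  with dF cF show ?case
    by (intro Cm_on_SucI[of UNIV F F']) (auto intro: continuous_at_imp_continuous_on)
qed

section \<open>Limits along the rationals and one-sided limits\<close>

lemma bounded_on_punctured_Icc:
  fixes g :: "real \<Rightarrow> 'a::real_normed_vector"
  assumes g: "continuous_on ({a..b} - {c}) g"
    and right: "(g \<longlongrightarrow> L) (at_right c)" and left: "(g \<longlongrightarrow> L') (at_left c)"
  obtains B where "\<And>x. x \<in> {a..b} - {c} \<Longrightarrow> norm (g x) \<le> B"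
proof -
  obtain b1 where b1: "b1 > c" "\<And>y. c < y \<Longrightarrow> y < b1 \<Longrightarrow> dist (g y) L < 1"
    using tendstoD[OF right zero_less_one] unfolding eventually_at_right_field by auto
  obtain b2 where b2: "b2 < c" "\<And>y. b2 < y \<Longrightarrow> y < c \<Longrightarrow> dist (g y) L' < 1"
    using tendstoD[OF left zero_less_one] unfolding eventually_at_left_field by auto
  have "continuous_on {max a b1..b} g" by (rule continuous_on_subset[OF g]) (use b1(1) in auto)
  then obtain B1 where B1: "\<And>x. x \<in> {max a b1..b} \<Longrightarrow> norm (g x) \<le> B1"
    using continuous_on_compact_bound[OF compact_Icc] by blast
  have "continuous_on {a..min b b2} g" by (rule continuous_on_subset[OF g]) (use b2(1) in auto)
  then obtain B2 where B2: "\<And>x. x \<in> {a..min b b2} \<Longrightarrow> norm (g x) \<le> B2"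
    using continuous_on_compact_bound[OF compact_Icc] by blast
  have "norm (g x) \<le> max (max (norm L + 1) (norm L' + 1)) (max B1 B2)" if x: "x \<in> {a..b} - {c}" for x
  proof -
    consider "c < x" "x < b1" | "b1 \<le> x" | "b2 < x" "x < c" | "x \<le> b2" using x by force
    then show ?thesis
    proof cases
      case 1
      then have "norm (g x) \<le> norm L + 1"
        using b1(2)[OF 1] norm_triangle_sub[of "g x" L] by (simp add: dist_norm)
      then show ?thesis by linarith
    next
      case 2
      then show ?thesis using B1[of x] x by fastforce
    next
      case 3
      then have "norm (g x) \<le> norm L' + 1"
        using b2(2)[OF 3] norm_triangle_sub[of "g x" L'] by (simp add: dist_norm)
      then show ?thesis by linarith
    next
      case 4
      then show ?thesis using B2[of x] x by fastforce
    qed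
  qed
  then show ?thesis using that by blast
qed

lemma at_within_Rats_neq_bot: "at (x::real) within \<rat> \<noteq> bot"
proof -
  have "x islimpt \<rat>"
    unfolding islimpt_approachable_real
  proof (intro allI impI)
    fix e :: real assume "e > 0"
    then obtain r where "r \<in> \<rat>" "x < r" "r < x + e" using Rats_dense_in_real[of x "x + e"] by auto
    then show "\<exists>x'\<in>\<rat>. x' \<noteq> x \<and> \<bar>x' - x\<bar> < e" by (intro bexI[of _ r]) auto
  qed
  then show ?thesis using trivial_limit_within by blast
qed

lemma isCont_eq_0_if_eq_0_on_Rats:
  fixes E :: "real \<Rightarrow> complex"
  assumes c: "isCont E x" and d: "\<delta> > 0" and z: "\<And>y. y \<in> \<rat> \<Longrightarrow> \<bar>y - x\<bar> < \<delta> \<Longrightarrow> E y = 0"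
  shows "E x = 0"
proof -
  have "(E \<longlongrightarrow> E x) (at x within \<rat>)"
    using continuous_at_imp_continuous_within[OF c, of "\<rat>"] by (simp add: continuous_within)
  moreover have "eventually (\<lambda>y. E y = 0) (at x within \<rat>)"
    unfolding eventually_at using d z by (auto simp: dist_real_def)
  then have "(E \<longlongrightarrow> 0) (at x within \<rat>)" by (simp add: tendsto_eventually)
  ultimately show ?thesis using tendsto_unique[OF at_within_Rats_neq_bot] by blast
qed

lemma filterlim_minus_inverse_at_right:
  fixes r :: real
  assumes "r > 0"
  shows "filterlim (\<lambda>t. - 1 / t) (at_right (- 1 / r)) (at_right r)"
proof (rule tendsto_imp_filterlim_at_right)
  show "((\<lambda>t. - 1 / t) \<longlongrightarrow> - 1 / r) (at_right r)"
    using assms by (auto intro!: tendsto_eq_intros)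
  have "eventually (\<lambda>t. t \<in> {r<..<r + 1}) (at_right r)" by (rule eventually_at_right_real) simp
  then show "\<forall>\<^sub>F t in at_right r. - 1 / r < - 1 / t"
    by eventually_elim (use assms in \<open>auto simp: field_simps\<close>)
qed

lemma filterlim_minus_inverse_at_left:
  fixes r :: real
  assumes "r > 0"
  shows "filterlim (\<lambda>t. - 1 / t) (at_left (- 1 / r)) (at_left r)"
proof (rule tendsto_imp_filterlim_at_left)
  show "((\<lambda>t. - 1 / t) \<longlongrightarrow> - 1 / r) (at_left r)"
    using assms by (auto intro!: tendsto_eq_intros)
  have "eventually (\<lambda>t. t \<in> {r / 2<..<r}) (at_left r)" by (rule eventually_at_left_real) (use assms in simp)
  then show "\<forall>\<^sub>F t in at_left r. - 1 / t < - 1 / r"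
    by eventually_elim (use assms in \<open>auto simp: field_simps\<close>)
qed

lemma periodic_tendsto_shift:
  fixes F :: "real \<Rightarrow> 'a::topological_space"
  assumes p: "\<And>x. F (x + 1) = F x"
  shows "(F \<longlongrightarrow> L) (at_right x) \<Longrightarrow> (F \<longlongrightarrow> L) (at_right (x + of_int n))"
    and "(F \<longlongrightarrow> L) (at_left x) \<Longrightarrow> (F \<longlongrightarrow> L) (at_left (x + of_int n))"
proof -
  have shift: "(\<lambda>y. F (y - of_int n)) = F"
    using periodic_shift_int[of F, OF p, of _ "- n"] by auto
  have "filterlim (\<lambda>y. y - of_int n) (at_right x) (at_right (x + of_int n))"
    by (rule tendsto_imp_filterlim_at_right) (auto intro!: tendsto_eq_intros simp: eventually_at_filter)
  moreover have "filterlim (\<lambda>y. y - of_int n) (at_left x) (at_left (x + of_int n))"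
    by (rule tendsto_imp_filterlim_at_left) (auto intro!: tendsto_eq_intros simp: eventually_at_filter)
  ultimately show "(F \<longlongrightarrow> L) (at_right x) \<Longrightarrow> (F \<longlongrightarrow> L) (at_right (x + of_int n))"
    and "(F \<longlongrightarrow> L) (at_left x) \<Longrightarrow> (F \<longlongrightarrow> L) (at_left (x + of_int n))"
    using filterlim_compose[of F "nhds L"] shift by metis+
qed

lemma coprime_diff_mult:
  fixes a n q :: int
  assumes "coprime a q"
  shows "coprime (a - n * q) q"
proof (rule coprimeI)
  fix c assume "c dvd a - n * q" "c dvd q"
  then have "c dvd (a - n * q) + n * q" by (intro dvd_add) auto
  then have "c dvd a" by simp
  with assms \<open>c dvd q\<close> show "is_unit c" using coprime_common_divisor by blast
qed

lemma reduced_fraction_split: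
  fixes a :: int and q :: nat
  assumes q: "q \<ge> 2" and cop: "coprime a (int q)"
  obtains n :: int and b :: nat where "0 < b" "b < q" "coprime (- int q) (int b)"
    "of_int a / of_nat q = of_int n + (of_nat b / of_nat q :: real)"
proof -
  define n where "n = \<lfloor>of_int a / (of_nat q :: real)\<rfloor>"
  define b where "b = a - n * int q"
  have q0: "real q > 0" using q by simp
  have ab: "of_int a / of_nat q = of_int n + (of_int b / of_nat q :: real)"
    using q0 by (simp add: b_def field_simps)
  have "0 \<le> of_int a / of_nat q - (of_int n :: real)" "of_int a / of_nat q - (of_int n :: real) < 1"
    unfolding n_def by (auto, linarith)
  then have "0 \<le> b" "b < int q"
    using q0 ab by (auto simp: zero_le_divide_iff divide_less_eq)
  moreover have "b \<noteq> 0"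
  proof
    assume "b = 0"
    then have "int q dvd a" by (simp add: b_def)
    with cop have "is_unit (int q)" by (metis coprime_common_divisor dvd_refl)
    with q show False by simp
  qed
  moreover have "coprime (- int q) b"
    using coprime_diff_mult[OF cop, of n] by (simp add: b_def coprime_commute)
  ultimately show ?thesis using that[of "nat b" n] ab by auto
qed

section \<open>Quantum modular forms\<close>

locale quantum_modular_form =
  fixes k :: complex and f h :: "real \<Rightarrow> complex" and hp hm :: complex
  assumes k_neg: "Re k < 0"
    and f_per: "\<forall>x\<in>\<rat>. f (x + 1) = f x"
    and h_eq: "\<forall>x\<in>\<rat> - {0}. h x = f x - (complex_of_real \<bar>x\<bar>) powr (- k) * f (- 1 / x)"
    and h_cont: "continuous_on ({-1..1} - {0}) h"
    and h_right: "(h \<longlongrightarrow> hp) (at_right 0)"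
    and h_left: "(h \<longlongrightarrow> hm) (at_left 0)"
begin

text \<open>With this value at \<open>0\<close>, the relation \<open>f = H + slash f\<close> also holds at \<open>x = 0\<close>.\<close>

definition H :: "real \<Rightarrow> complex" where
  "H = h(0 := f 0)"

lemma f_shift_int:
  assumes "x \<in> \<rat>"
  shows "f (x + of_int n) = f x"
proof -
  define F where "F y = (if y \<in> \<rat> then f y else 0)" for y
  have "F (y + 1) = F y" for y
  proof (cases "y \<in> \<rat>")
    case False
    then have "y + 1 \<notin> \<rat>" by (metis Rats_1 Rats_diff add_diff_cancel)
    with False show ?thesis by (simp add: F_def)
  qed (use f_per in \<open>simp add: F_def\<close>)
  from periodic_shift_int[of F, OF this, of x n] assms show ?thesis by (simp add: F_def)
qed

lemma f_funeq: "x \<in> \<rat> \<Longrightarrow> f x = funeq_rhs H (- k) f x"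
  using h_eq by (cases "x = 0") (auto simp: funeq_rhs_def H_def slash_def opt_sgn_def of_real_abs_powr)

lemma isCont_h:
  assumes "0 < \<bar>r\<bar>" "\<bar>r\<bar> < 1"
  shows "isCont h r"
proof -
  have "continuous_on ({-1<..<1} - {0}) h" by (rule continuous_on_subset[OF h_cont]) auto
  moreover have "open ({-1<..<1} - {0::real})" by (intro open_Diff) auto
  ultimately show ?thesis
    using continuous_on_eq_continuous_at assms by (fastforce simp: abs_less_iff)
qed

lemma isCont_H: "0 < \<bar>r\<bar> \<Longrightarrow> \<bar>r\<bar> < 1 \<Longrightarrow> isCont H r"
proof -
  assume r: "0 < \<bar>r\<bar>" "\<bar>r\<bar> < 1"
  have "eventually (\<lambda>y. y \<in> - {0}) (nhds r)" using r by (intro eventually_nhds_in_open) auto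
  then have "eventually (\<lambda>y. h y = H y) (nhds r)" by eventually_elim (auto simp: H_def)
  with isCont_h[OF r] show ?thesis using isCont_cong by fastforce
qed

lemma H_bounded:
  obtains A where "\<And>r. \<bar>r\<bar> < 1 \<Longrightarrow> norm (H r) \<le> A"
proof -
  obtain B where "\<And>x. x \<in> {-1..1} - {0} \<Longrightarrow> norm (h x) \<le> B"
    using bounded_on_punctured_Icc[OF h_cont h_right h_left] by blast
  then have "norm (H r) \<le> max B (norm (f 0))" if "\<bar>r\<bar> < 1" for r
    using that by (cases "r = 0") (auto simp: H_def abs_less_iff intro: le_max_iff_disj[THEN iffD2])
  then show ?thesis using that by blast
qed

lemma f_funeq_op_fixed: "x \<in> \<rat> \<Longrightarrow> funeq_op H (- k) f x = f x"
proof (rule funeq_op_fixed)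
  fix n :: int
  assume "x \<in> \<rat>"
  then show "f (x - of_int n) = funeq_rhs H (- k) f (x - of_int n)" "f (x - of_int n) = f x"
    using f_funeq[of "x - of_int n"] f_shift_int[of x "- n"] by auto
qed

text \<open>\<open>f\<close> and the fixed point \<open>F\<close> of \<open>funeq_op\<close> are both bounded fixed points on \<open>\<rat>\<close>, so they
  agree there; since \<open>F\<close> is continuous at irrationals, \<open>fdag f = F\<close>.\<close>

lemma fdag_fixed_point:
  obtains B where "\<And>x. funeq_op H (- k) (fdag f) x = fdag f x" "\<And>x. norm (fdag f x) \<le> B"
    "\<And>x. x \<notin> \<rat> \<Longrightarrow> isCont (fdag f) x" "\<And>x. x \<notin> \<rat> \<Longrightarrow> (f \<longlongrightarrow> fdag f x) (at x within \<rat>)"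
proof -
  have s: "Re (- k) > 0" using k_neg by simp
  obtain A where A: "\<And>r. \<bar>r\<bar> < 1 \<Longrightarrow> norm (H r) \<le> A" using H_bounded by blast
  have Hc: "isCont H r" if "\<bar>r\<bar> < 1" "r \<notin> \<rat>" for r
    using that by (intro isCont_H) auto
  obtain F B where F: "\<And>x. funeq_op H (- k) F x = F x" "\<And>x. norm (F x) \<le> B"
    "\<And>x. x \<notin> \<rat> \<Longrightarrow> isCont F x"
    using funeq_op_fixed_point_exists[where H=H, OF s A Hc] by blast
  have f_eq_F: "f x = F x" if "x \<in> \<rat>" for x
    using funeq_op_fixed_points_agree_on_Rats[where H=H, OF s f_funeq_op_fixed
        norm_le_if_funeq_op_fixed_on_Rats[where H=H, OF s A f_funeq_op_fixed] F(1,2) that] .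
  have lim: "(f \<longlongrightarrow> F x) (at x within \<rat>)" if "x \<notin> \<rat>" for x
  proof -
    have "(F \<longlongrightarrow> F x) (at x within \<rat>)"
      using continuous_at_imp_continuous_within[OF F(3)[OF that], of "\<rat>"] by (simp add: continuous_within)
    moreover have "eventually (\<lambda>y. F y = f y) (at x within \<rat>)"
      by (auto simp: eventually_at_filter f_eq_F)
    ultimately show ?thesis using tendsto_cong by fastforce
  qed
  have "fdag f = F"
  proof
    fix x
    show "fdag f x = F x"
      using f_eq_F tendsto_Lim[OF at_within_Rats_neq_bot lim] by (cases "x \<in> \<rat>") (auto simp: fdag_def)
  qed
  with F lim show ?thesis using that by blast
qed

lemma fdag_Rats [simp]: "x \<in> \<rat> \<Longrightarrow> fdag f x = f x"
  by (simp add: fdag_def)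

lemma isCont_fdag_irrational: "x \<notin> \<rat> \<Longrightarrow> isCont (fdag f) x"
  by (metis fdag_fixed_point)

lemma f_tendsto_fdag_irrational: "x \<notin> \<rat> \<Longrightarrow> (f \<longlongrightarrow> fdag f x) (at x within \<rat>)"
  by (metis fdag_fixed_point)

lemma fdag_periodic: "fdag f (x + 1) = fdag f x"
  by (metis fdag_fixed_point funeq_op_periodic)

lemma fdag_bounded:
  obtains B where "\<And>x. norm (fdag f x) \<le> B"
  by (metis fdag_fixed_point)

lemma fdag_funeq:
  assumes x: "x \<in> {-1..1}"
  shows "fdag f x = funeq_rhs H (- k) (fdag f) x"
proof (cases "x \<in> \<rat>")
  case True
  then have "slash False (- k) (fdag f) x = slash False (- k) f x"
    by (cases "x = 0") (auto simp: slash_def)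
  with True show ?thesis using f_funeq by (simp add: funeq_rhs_def)
next
  case False
  then have "x \<noteq> 0" "x \<noteq> 1" "x \<noteq> -1" by auto
  with x have "\<bar>x\<bar> < 1" by auto
  define E where "E y = fdag f y - funeq_rhs H (- k) (fdag f) y" for y
  have cE: "isCont E x"
    unfolding E_def[abs_def] funeq_rhs_def
    using isCont_fdag_irrational[OF False] isCont_H[of x] \<open>x \<noteq> 0\<close> \<open>\<bar>x\<bar> < 1\<close>
      isCont_slash_nonzero[OF \<open>x \<noteq> 0\<close> isCont_fdag_irrational[OF minus_one_div_notin_Rats[OF False]]]
    by (intro continuous_intros) auto
  have E_Rats: "E y = 0" if "y \<in> \<rat>" "\<bar>y - x\<bar> < 1 - \<bar>x\<bar>" for y
  proof -
    have "slash False (- k) (fdag f) y = slash False (- k) f y"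
      using that by (cases "y = 0") (auto simp: slash_def)
    then show ?thesis using that f_funeq[of y] by (simp add: E_def funeq_rhs_def)
  qed
  have "E x = 0" by (rule isCont_eq_0_if_eq_0_on_Rats[OF cE _ E_Rats]) (use \<open>\<bar>x\<bar> < 1\<close> in auto)
  then show ?thesis by (simp add: E_def)
qed

lemma fdag_tendsto_0: "(fdag f \<longlongrightarrow> hp) (at_right 0)" "(fdag f \<longlongrightarrow> hm) (at_left 0)"
proof -
  obtain B where B: "\<And>x. norm (fdag f x) \<le> B" using fdag_bounded by blast
  have slash_lim: "(slash False (- k) (fdag f) \<longlongrightarrow> 0) (at 0 within S)" for S
    using slash_tendsto_0[of "- k" "fdag f" B] k_neg B by simp
  have eq: "h t + slash False (- k) (fdag f) t = fdag f t" if "t \<in> {-1<..<1} - {0}" for t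
    using fdag_funeq[of t] that by (simp add: funeq_rhs_def H_def)
  have "eventually (\<lambda>t. t \<in> {0<..<1}) (at_right (0::real))" by (rule eventually_at_right_real) simp
  then have "eventually (\<lambda>t. h t + slash False (- k) (fdag f) t = fdag f t) (at_right 0)"
    by eventually_elim (use eq in auto)
  with tendsto_add[OF h_right slash_lim] show "(fdag f \<longlongrightarrow> hp) (at_right 0)"
    using tendsto_cong by fastforce
  have "eventually (\<lambda>t. t \<in> {-1<..<0}) (at_left (0::real))" by (rule eventually_at_left_real) simp
  then have "eventually (\<lambda>t. h t + slash False (- k) (fdag f) t = fdag f t) (at_left 0)"
    by eventually_elim (use eq in auto)
  with tendsto_add[OF h_left slash_lim] show "(fdag f \<longlongrightarrow> hm) (at_left 0)"
    using tendsto_cong by fastforce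
qed

lemma fdag_tendsto_inversion:
  assumes r: "0 < r" "r < 1" and F1: "F1 \<le> at r"
    and inv: "filterlim (\<lambda>t. - 1 / t) G F1" and lim: "(fdag f \<longlongrightarrow> L) G"
  shows "(fdag f \<longlongrightarrow> h r + abs_powr (- k) r * L) F1"
proof -
  have "eventually (\<lambda>t. t \<in> {0<..<1}) (nhds r)" using r by (intro eventually_nhds_in_open) auto
  then have "eventually (\<lambda>t. h t + abs_powr (- k) t * fdag f (- 1 / t) = fdag f t) (at r)"
    unfolding eventually_at_filter
    by (rule eventually_mono) (use fdag_funeq in \<open>auto simp: funeq_rhs_def H_def slash_def opt_sgn_def\<close>)
  then have ev: "eventually (\<lambda>t. h t + abs_powr (- k) t * fdag f (- 1 / t) = fdag f t) F1"
    by (rule filter_leD[OF F1])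
  have "(h \<longlongrightarrow> h r) F1"
    using isCont_h[of r] r tendsto_mono[OF F1] by (simp add: isCont_def)
  moreover have "(abs_powr (- k) \<longlongrightarrow> abs_powr (- k) r) F1"
    using has_vector_derivative_continuous[OF abs_powr_has_vector_derivative, of r "- k"] r
      tendsto_mono[OF F1] by (simp add: isCont_def)
  moreover have "((\<lambda>t. fdag f (- 1 / t)) \<longlongrightarrow> L) F1" by (rule filterlim_compose[OF lim inv])
  ultimately have "((\<lambda>t. h t + abs_powr (- k) t * fdag f (- 1 / t)) \<longlongrightarrow> h r + abs_powr (- k) r * L) F1"
    by (intro tendsto_intros)
  with ev show ?thesis using tendsto_cong by fastforce
qed

lemma fdag_tendsto_fraction_inversion:
  fixes b q :: nat
  assumes b: "0 < b" "b < q"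
  defines "r \<equiv> of_nat b / of_nat q :: real"
  shows "(fdag f \<longlongrightarrow> f (- 1 / r) + of_nat b powr k * (v - f 0)) (at_right (- 1 / r))
      \<Longrightarrow> (fdag f \<longlongrightarrow> f r + of_nat q powr k * (v - f 0)) (at_right r)"
    and "(fdag f \<longlongrightarrow> f (- 1 / r) + of_nat b powr k * (v - f 0)) (at_left (- 1 / r))
      \<Longrightarrow> (fdag f \<longlongrightarrow> f r + of_nat q powr k * (v - f 0)) (at_left r)"
proof -
  have "0 < r" "r < 1" "r \<in> \<rat>" using b by (auto simp: r_def)
  have "f r = h r + abs_powr (- k) r * f (- 1 / r)"
    using f_funeq[OF \<open>r \<in> \<rat>\<close>] \<open>0 < r\<close> by (simp add: funeq_rhs_def H_def slash_def opt_sgn_def)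
  moreover have "abs_powr (- k) r * of_nat b powr k = of_nat q powr k"
    using abs_powr_nat_ratio[of b q k] b by (simp add: r_def)
  ultimately have value_eq: "h r + abs_powr (- k) r * (f (- 1 / r) + of_nat b powr k * (v - f 0))
      = f r + of_nat q powr k * (v - f 0)"
    by (simp add: algebra_simps)
  show "(fdag f \<longlongrightarrow> f (- 1 / r) + of_nat b powr k * (v - f 0)) (at_right (- 1 / r))
      \<Longrightarrow> (fdag f \<longlongrightarrow> f r + of_nat q powr k * (v - f 0)) (at_right r)"
    using fdag_tendsto_inversion[where L="f (- 1 / r) + of_nat b powr k * (v - f 0)",
        OF \<open>0 < r\<close> \<open>r < 1\<close> at_within_le_at filterlim_minus_inverse_at_right[OF \<open>0 < r\<close>]]
    by (simp only: value_eq)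
  show "(fdag f \<longlongrightarrow> f (- 1 / r) + of_nat b powr k * (v - f 0)) (at_left (- 1 / r))
      \<Longrightarrow> (fdag f \<longlongrightarrow> f r + of_nat q powr k * (v - f 0)) (at_left r)"
    using fdag_tendsto_inversion[where L="f (- 1 / r) + of_nat b powr k * (v - f 0)",
        OF \<open>0 < r\<close> \<open>r < 1\<close> at_within_le_at filterlim_minus_inverse_at_left[OF \<open>0 < r\<close>]]
    by (simp only: value_eq)
qed

text \<open>Induction on the denominator: writing \<open>a/q = n + b/q\<close> with \<open>0 < b < q\<close>, the functional
  equation near \<open>b/q\<close> transfers the one-sided limits at \<open>-q/b\<close>, whose denominator is smaller.\<close>

lemma fdag_tendsto_rational:
  fixes a :: int and q :: nat
  assumes "q \<ge> 1" "coprime a (int q)"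
  shows "(fdag f \<longlongrightarrow> f (of_int a / of_nat q) + of_nat q powr k * (hp - f 0)) (at_right (of_int a / of_nat q))
    \<and> (fdag f \<longlongrightarrow> f (of_int a / of_nat q) + of_nat q powr k * (hm - f 0)) (at_left (of_int a / of_nat q))"
  using assms
proof (induction q arbitrary: a rule: less_induct)
  case (less q)
  consider "q = 1" | "q \<ge> 2" using less.prems(1) by linarith
  then show ?case
  proof cases
    case 1
    have "f (of_int a) = f 0" using f_shift_int[of 0 a] by simp
    with 1 show ?thesis
      using periodic_tendsto_shift(1)[where F="fdag f", OF fdag_periodic fdag_tendsto_0(1), of a]
        periodic_tendsto_shift(2)[where F="fdag f", OF fdag_periodic fdag_tendsto_0(2), of a] by simp
  next
    case 2
    obtain n :: int and b :: nat where b: "0 < b" "b < q" "coprime (- int q) (int b)"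
      and a_q: "of_int a / of_nat q = of_int n + (of_nat b / of_nat q :: real)"
      using reduced_fraction_split[OF 2 less.prems(2)] by blast
    define r where "r = of_nat b / (of_nat q :: real)"
    have "- 1 / r = of_int (- int q) / of_nat b" using b by (simp add: r_def)
    with less.IH[of b "- int q"] b have
      "(fdag f \<longlongrightarrow> f (- 1 / r) + of_nat b powr k * (hp - f 0)) (at_right (- 1 / r))"
      "(fdag f \<longlongrightarrow> f (- 1 / r) + of_nat b powr k * (hm - f 0)) (at_left (- 1 / r))"
      by auto
    note IH = this[unfolded r_def]
    have "f (of_int a / of_nat q) = f r"
      using f_shift_int[of r n] by (simp add: a_q r_def add.commute)
    with periodic_tendsto_shift(1)[where F="fdag f", OF fdag_periodic,
        OF fdag_tendsto_fraction_inversion(1)[OF b(1,2) IH(1)], of n]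
      periodic_tendsto_shift(2)[where F="fdag f", OF fdag_periodic,
        OF fdag_tendsto_fraction_inversion(2)[OF b(1,2) IH(2)], of n]
    show ?thesis by (simp add: a_q r_def add.commute)
  qed
qed

lemma continuous_on_fdag_iff: "continuous_on UNIV (fdag f) \<longleftrightarrow> hp = f 0 \<and> hm = f 0"
proof
  assume "continuous_on UNIV (fdag f)"
  then have "isCont (fdag f) 0" using continuous_on_eq_continuous_at[OF open_UNIV] by blast
  then have "(fdag f \<longlongrightarrow> f 0) (at 0)" using fdag_Rats[OF Rats_0] by (simp add: isCont_def)
  then have "(fdag f \<longlongrightarrow> f 0) (at_right 0)" "(fdag f \<longlongrightarrow> f 0) (at_left 0)"
    by (auto intro: tendsto_mono[OF at_le])
  then show "hp = f 0 \<and> hm = f 0"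
    using tendsto_unique[OF trivial_limit_at_right_real fdag_tendsto_0(1)]
      tendsto_unique[OF trivial_limit_at_left_real fdag_tendsto_0(2)] by blast
next
  assume h0: "hp = f 0 \<and> hm = f 0"
  have "isCont (fdag f) x" for x
  proof (cases "x \<in> \<rat>")
    case True
    then obtain a b :: int where "b > 0" "coprime a b" "x = of_int a / of_int b"
      using Rats_cases' by metis
    then have "x = of_int a / of_nat (nat b)" "nat b \<ge> 1" "coprime a (int (nat b))" by simp_all
    with fdag_tendsto_rational[of "nat b" a] True h0
    have "(fdag f \<longlongrightarrow> fdag f x) (at_left x)" "(fdag f \<longlongrightarrow> fdag f x) (at_right x)" by auto
    then show ?thesis unfolding isCont_def by (rule filterlim_split_at)
  qed (rule isCont_fdag_irrational)
  then show "continuous_on UNIV (fdag f)" by (rule continuous_at_imp_continuous_on[OF ballI])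
qed

lemma fdag_Cm:
  assumes "hp = f 0" "hm = f 0" "2 * real m < - Re k" "Cm_on m {-1..1} (h(0 := hp))"
  shows "Cm_on m UNIV (fdag f)"
proof (rule funeq_solution_Cm[of m "- k" H])
  show "isCont (fdag f) x" for x
    using continuous_on_fdag_iff assms(1,2) continuous_on_eq_continuous_at[OF open_UNIV] by blast
qed (use assms fdag_periodic fdag_funeq in \<open>auto simp: H_def\<close>)

end

theorem theorem1p1:
  fixes k :: complex and f h :: "real \<Rightarrow> complex" and hp hm :: complex
  assumes k_neg: "Re k < 0"
    and f_per: "\<forall>x\<in>\<rat>. f (x + 1) = f x"
    and h_eq: "\<forall>x\<in>\<rat> - {0}.
                 h x = f x - (complex_of_real \<bar>x\<bar>) powr (- k) * f (- 1 / x)"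
    and h_cont: "continuous_on ({-1..1} - {0}) h"
    and h_right: "(h \<longlongrightarrow> hp) (at_right 0)"
    and h_left: "(h \<longlongrightarrow> hm) (at_left 0)"
  shows "(\<forall>x. x \<notin> \<rat> \<longrightarrow> (\<exists>L. (f \<longlongrightarrow> L) (at x within \<rat>)))
    \<and> (\<forall>x. x \<notin> \<rat> \<longrightarrow> isCont (fdag f) x)
    \<and> (\<forall>(a::int) (q::nat). q \<ge> 1 \<longrightarrow> coprime a (int q) \<longrightarrow>
          (fdag f \<longlongrightarrow> f (of_int a / of_nat q) + (of_nat q) powr k * (hp - f 0))
             (at_right (of_int a / of_nat q))
        \<and> (fdag f \<longlongrightarrow> f (of_int a / of_nat q) + (of_nat q) powr k * (hm - f 0))
             (at_left (of_int a / of_nat q)))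
    \<and> (continuous_on UNIV (fdag f) \<longleftrightarrow> hp = f 0 \<and> hm = f 0)
    \<and> (hp = f 0 \<and> hm = f 0 \<longrightarrow>
         (\<forall>m::nat. real m < \<bar>Re k\<bar> / 2 \<longrightarrow> Cm_on m {-1..1} (h(0 := hp))
              \<longrightarrow> Cm_on m UNIV (fdag f)))"
proof -
  interpret quantum_modular_form k f h hp hm
    using assms by unfold_locales
  have "real m < \<bar>Re k\<bar> / 2 \<longleftrightarrow> 2 * real m < - Re k" for m
    using k_neg by auto
  then show ?thesis
    using f_tendsto_fdag_irrational isCont_fdag_irrational fdag_tendsto_rational
      continuous_on_fdag_iff fdag_Cm by blast
qed

end
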